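(* For the SVIQR system, if $R_0>1$ then the unique endemic equilibrium $E^*=(S_k^*,V_k^*,I_k^*,Q_k^*,R_k^* )_{k=1}^n$ (the unique equilibrium with nonnegative components and $\Theta>0$) is globally asymptotically stable: it is Lyapunov stable, and every solution whose initial data satisfy $S_k(0),V_k(0),I_k(0),Q_k(0),R_k(0)>0$ and $S_k(0)+V_k(0)+I_k(0)+Q_k(0)+R_k(0)=N_k^*$ for all $k$ converges to $E^*$ as $t\to\infty$.
   Context: Fix an integer $n\ge1$ and numbers $p(1),\dots,p(n)>0$ with $\sum_{k=1}^n p(k)=1$; set $\langle k\rangle=\sum_{k=1}^n kp(k)$. Fix constants $b>d>0$ and let $\Phi^*>0$ satisfy $\Phi^*=\frac{1}{\langle k\rangle}\sum_{i=1}^n \frac{i\,p(i)\,b\Phi^*}{d+bi\Phi^*}$. For $k=1,\dots,n$ put $N_k^*=\frac{bk\Phi^*}{d+bk\Phi^*}\in(0,1)$ and $\Lambda_k=bk(1-N_k^* )\Phi^*$ (so $\Lambda_k=dN_k^*>0$). Parameters: $\lambda(k)>0$, $\varphi(k)>0$, $\mu_k>0$ for $k=1,\dots,n$; constants $\alpha,\beta,\gamma,\eta,\omega>0$ and $\delta\in[0,1]$. For functions $I_1(t),\dots,I_n(t)$ set $\Theta(t)=\frac{1}{\langle k\rangle}\sum_{i=1}^n\varphi(i)p(i)I_i(t)$. The SVIQR system is, for $k=1,\dots,n$: $S_k'=\Lambda_k-\lambda(k)S_k\Theta+\omega V_k-(\mu_k+d)S_k$, $V_k'=\mu_kS_k-\delta\lambda(k)V_k\Theta-(d+\omega+\alpha)V_k$,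 $I_k'=\lambda(k)S_k\Theta+\delta\lambda(k)V_k\Theta-(\gamma+\beta+d)I_k$, $Q_k'=\beta I_k-(\eta+d)Q_k$, $R_k'=\gamma I_k+\eta Q_k+\alpha V_k-dR_k$. Its basic reproduction number is $R_0=\frac{1}{\langle k\rangle}\sum_{k=1}^n\varphi(k)p(k)\lambda(k)\frac{\Lambda_k(d+\omega+\alpha+\delta\mu_k)}{(\gamma+\beta+d)[(d+\alpha+\omega)d+(d+\alpha)\mu_k]}$. When $R_0>1$ the system has exactly one equilibrium with nonnegative components and $\Theta>0$ (endemic equilibrium), denoted $E^*$. *)

theory Defs
  imports "HOL-Analysis.Analysis"
begin

text \<open>Network SVIQR model. Degree classes are indexed by k in {1..n};
states are functions nat => real (only the values at k in {1..n} matter).\<close>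

definition avgdeg :: "nat \<Rightarrow> (nat \<Rightarrow> real) \<Rightarrow> real" where
  "avgdeg n p = (\<Sum>k=1..n. real k * p k)"

definition Nstar :: "real \<Rightarrow> real \<Rightarrow> real \<Rightarrow> nat \<Rightarrow> real" where
  "Nstar b d Phi k = b * real k * Phi / (d + b * real k * Phi)"

definition Lam :: "real \<Rightarrow> real \<Rightarrow> real \<Rightarrow> nat \<Rightarrow> real" where
  "Lam b d Phi k = b * real k * (1 - Nstar b d Phi k) * Phi"

definition Theta :: "nat \<Rightarrow> (nat \<Rightarrow> real) \<Rightarrow> (nat \<Rightarrow> real) \<Rightarrow> (nat \<Rightarrow> real) \<Rightarrow> real" where
  "Theta n p phi I = (1 / avgdeg n p) * (\<Sum>i=1..n. phi i * p i * I i)"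

definition R0 where
  "R0 n p lam phi mu b d Phi alpha beta gamma omega delta =
     (1 / avgdeg n p) * (\<Sum>k=1..n. phi k * p k * lam k *
        (Lam b d Phi k * (d + omega + alpha + delta * mu k)) /
        ((gamma + beta + d) * ((d + alpha + omega) * d + (d + alpha) * mu k)))"

definition rhsS where
  "rhsS n p lam phi mu b d Phi omega S V I k =
     Lam b d Phi k - lam k * S k * Theta n p phi I + omega * V k - (mu k + d) * S k"

definition rhsV where
  "rhsV n p lam phi mu d alpha omega delta S V I k =
     mu k * S k - delta * lam k * V k * Theta n p phi I - (d + omega + alpha) * V k"

definition rhsI where
  "rhsI n p lam phi d beta gamma delta S V I k =
     lam k * S k * Theta n p phi I + delta * lam k * V k * Theta n p phi I
       - (gamma + beta + d) * I k"

definition rhsQ where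
  "rhsQ d beta eta I Q k = beta * I k - (eta + d) * Q k"

definition rhsR where
  "rhsR d alpha gamma eta V I Q R k = gamma * I k + eta * Q k + alpha * V k - d * R k"

definition is_solution where
  "is_solution n p lam phi mu b d Phi alpha beta gamma eta omega delta
      (S :: real \<Rightarrow> nat \<Rightarrow> real) V I Q R \<longleftrightarrow>
   (\<forall>t\<ge>0. \<forall>k\<in>{1..n}.
      ((\<lambda>\<tau>. S \<tau> k) has_real_derivative
          rhsS n p lam phi mu b d Phi omega (S t) (V t) (I t) k) (at t within {0..}) \<and>
      ((\<lambda>\<tau>. V \<tau> k) has_real_derivative
          rhsV n p lam phi mu d alpha omega delta (S t) (V t) (I t) k) (at t within {0..}) \<and>
      ((\<lambda>\<tau>. I \<tau> k) has_real_derivative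
          rhsI n p lam phi d beta gamma delta (S t) (V t) (I t) k) (at t within {0..}) \<and>
      ((\<lambda>\<tau>. Q \<tau> k) has_real_derivative
          rhsQ d beta eta (I t) (Q t) k) (at t within {0..}) \<and>
      ((\<lambda>\<tau>. R \<tau> k) has_real_derivative
          rhsR d alpha gamma eta (V t) (I t) (Q t) (R t) k) (at t within {0..}))"

definition is_endemic_equilibrium where
  "is_endemic_equilibrium n p lam phi mu b d Phi alpha beta gamma eta omega delta
      (Se :: nat \<Rightarrow> real) Ve Ie Qe Rst \<longleftrightarrow>
   (\<forall>k\<in>{1..n}.
      rhsS n p lam phi mu b d Phi omega Se Ve Ie k = 0 \<and>
      rhsV n p lam phi mu d alpha omega delta Se Ve Ie k = 0 \<and>
      rhsI n p lam phi d beta gamma delta Se Ve Ie k = 0 \<and>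
      rhsQ d beta eta Ie Qe k = 0 \<and>
      rhsR d alpha gamma eta Ve Ie Qe Rst k = 0 \<and>
      Se k \<ge> 0 \<and> Ve k \<ge> 0 \<and> Ie k \<ge> 0 \<and> Qe k \<ge> 0 \<and> Rst k \<ge> 0) \<and>
   Theta n p phi Ie > 0"

definition sdist where
  "sdist n (S :: nat \<Rightarrow> real) V I Q R S' V' I' Q' R' =
     (\<Sum>k=1..n. \<bar>S k - S' k\<bar> + \<bar>V k - V' k\<bar> + \<bar>I k - I' k\<bar> + \<bar>Q k - Q' k\<bar> + \<bar>R k - R' k\<bar>)"

definition admissible_init where
  "admissible_init n b d Phi (S0 :: nat \<Rightarrow> real) V0 I0 Q0 R0i \<longleftrightarrow>
   (\<forall>k\<in>{1..n}. S0 k > 0 \<and> V0 k > 0 \<and> I0 k > 0 \<and> Q0 k > 0 \<and> R0i k > 0 \<and>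
      S0 k + V0 k + I0 k + Q0 k + R0i k = Nstar b d Phi k)"

end

theory Submission
  imports Defs
begin

text \<open>
  Each class size \<open>S_k + V_k + I_k + Q_k + R_k\<close> satisfies
  \<open>N_k' = d (N_k\<^sup>* - N_k)\<close> and so stays equal to \<open>N_k\<^sup>* < 1\<close>; a continuation argument keeps all
  components positive. With the Volterra function \<open>v a x = x - a - a ln (x / a) \<ge> 0\<close> and the
  weights \<open>c_k = \<phi>(k) p(k) / \<langle>k\<rangle>\<close>, the function
  \<open>W = \<Sum>\<^sub>k c_k (v S_k\<^sup>* S_k + v V_k\<^sup>* V_k + v I_k\<^sup>* I_k)\<close> satisfies
  \<open>W' \<le> - \<Sum>\<^sub>k c_k (d (S_k - S_k\<^sup>*)\<^sup>2 + \<omega> / S_k\<^sup>* (S_k V_k\<^sup>* - V_k S_k\<^sup>*)\<^sup>2)\<close>: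
  within a class the estimate is AM-GM, and the terms involving \<open>\<Theta>\<close> cancel after weighting by
  \<open>c_k\<close>. Barbalat's lemma makes the right-hand side tend to \<open>0\<close>, so \<open>S_k\<close> and \<open>V_k\<close> converge,
  then \<open>\<Theta>\<close> converges, and \<open>I_k\<close>, \<open>Q_k\<close>, \<open>R_k\<close> follow from their linear equations.
  For stability, \<open>W\<close> is non-increasing, \<open>W 0\<close> is linear in the initial distance \<open>s\<close> and
  \<open>(x - a)\<^sup>2 \<le> 4 v a x\<close>, so \<open>S\<close>, \<open>V\<close>, \<open>I\<close> stay within \<open>O(\<surd>s)\<close> of the equilibrium, and
  comparison for linear equations controls \<open>Q\<close> and \<open>R\<close>.
\<close>

section \<open>Differential inequalities on the half-line\<close>

lemma at_within_nonneg_eq_at: "(x::real) > 0 \<Longrightarrow> at x within {0..} = at x"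
  by (rule at_within_interior) simp

lemma DERIV_within_nonneg_imp_continuous_on:
  assumes "\<And>x. s \<le> x \<Longrightarrow> x \<le> t \<Longrightarrow> (f has_real_derivative f' x) (at x within {0..})" "0 \<le> s"
  shows "continuous_on {s..t} f"
  unfolding continuous_on_eq_continuous_within
proof
  fix x assume "x \<in> {s..t}"
  then have "(f has_real_derivative f' x) (at x within {s..t})"
    using assms by (intro DERIV_subset[OF assms(1)]) auto
  then show "continuous (at x within {s..t}) f" by (rule DERIV_continuous)
qed

lemma DERIV_nonneg_imp_increasing_on_nonneg:
  fixes f f' :: "real \<Rightarrow> real"
  assumes "0 \<le> s" "s \<le> t"
    and deriv: "\<And>x. s \<le> x \<Longrightarrow> x \<le> t \<Longrightarrow> (f has_real_derivative f' x) (at x within {0..})"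
    and nonneg: "\<And>x. s < x \<Longrightarrow> x < t \<Longrightarrow> f' x \<ge> 0"
  shows "f s \<le> f t"
proof (rule DERIV_nonneg_imp_increasing_open[OF assms(2)])
  fix x assume x: "s < x" "x < t"
  have "(f has_real_derivative f' x) (at x)"
    using deriv[of x] x assms(1) by (simp add: at_within_nonneg_eq_at)
  then show "\<exists>y. DERIV f x :> y \<and> y \<ge> 0" using nonneg[OF x] by blast
qed (use DERIV_within_nonneg_imp_continuous_on[OF deriv] assms(1) in auto)

lemma DERIV_nonpos_imp_decreasing_on_nonneg:
  fixes f f' :: "real \<Rightarrow> real"
  assumes "0 \<le> s" "s \<le> t"
    and "\<And>x. s \<le> x \<Longrightarrow> x \<le> t \<Longrightarrow> (f has_real_derivative f' x) (at x within {0..})"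
    and "\<And>x. s < x \<Longrightarrow> x < t \<Longrightarrow> f' x \<le> 0"
  shows "f t \<le> f s"
  using DERIV_nonneg_imp_increasing_on_nonneg[of s t "\<lambda>x. - f x" "\<lambda>x. - f' x"] assms
  by (auto intro!: derivative_eq_intros)

lemma MVT_nonneg:
  fixes f f' :: "real \<Rightarrow> real"
  assumes "0 < a" "a < b"
    and "\<And>x. a \<le> x \<Longrightarrow> x \<le> b \<Longrightarrow> (f has_real_derivative f' x) (at x within {0..})"
  shows "\<exists>\<xi>. a < \<xi> \<and> \<xi> < b \<and> f b - f a = (b - a) * f' \<xi>"
  using assms by (intro MVT2) (auto simp: at_within_nonneg_eq_at)

text \<open>Multiplying by the integrating factor \<open>exp (K * t)\<close> turns \<open>f' \<ge> - K * f\<close>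
  into monotonicity.\<close>

lemma DERIV_ge_linear_imp_pos:
  fixes f f' :: "real \<Rightarrow> real"
  assumes "0 \<le> t"
    and deriv: "\<And>x. 0 \<le> x \<Longrightarrow> x \<le> t \<Longrightarrow> (f has_real_derivative f' x) (at x within {0..})"
    and ge: "\<And>x. 0 < x \<Longrightarrow> x < t \<Longrightarrow> f' x + K * f x \<ge> 0" and "f 0 > 0"
  shows "f t > 0"
proof -
  have "f 0 * exp (K * 0) \<le> f t * exp (K * t)"
  proof (rule DERIV_nonneg_imp_increasing_on_nonneg[OF order.refl \<open>0 \<le> t\<close>])
    fix x assume "0 \<le> x" "x \<le> t"
    show "((\<lambda>x. f x * exp (K * x)) has_real_derivative (f' x + K * f x) * exp (K * x))
        (at x within {0..})"
      by (rule derivative_eq_intros deriv \<open>0 \<le> x\<close> \<open>x \<le> t\<close> refl)+ (simp add: algebra_simps)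
  qed (use ge in simp)
  then have "f t * exp (K * t) > 0" using \<open>f 0 > 0\<close> by simp
  then show ?thesis by (simp add: zero_less_mult_iff)
qed

lemma linear_ode_upper_bound:
  fixes g g' e :: "real \<Rightarrow> real"
  assumes "m > 0" "0 \<le> T" "T \<le> t"
    and deriv: "\<And>x. T \<le> x \<Longrightarrow> (g has_real_derivative g' x) (at x within {0..})"
    and ode: "\<And>x. T \<le> x \<Longrightarrow> g' x = - m * g x + e x"
    and "\<And>x. T \<le> x \<Longrightarrow> e x \<le> E"
  shows "g t \<le> E / m + (g T - E / m) * exp (- m * (t - T))"
proof -
  define h where "h x = (g x - E / m) * exp (m * x)" for x
  have "h t \<le> h T"
  proof (rule DERIV_nonpos_imp_decreasing_on_nonneg[OF \<open>0 \<le> T\<close> \<open>T \<le> t\<close>])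
    fix x assume "T \<le> x" "x \<le> t"
    show "(h has_real_derivative (e x - E) * exp (m * x)) (at x within {0..})"
      unfolding h_def
      by (rule derivative_eq_intros deriv \<open>T \<le> x\<close> refl)+
        (use \<open>m > 0\<close> in \<open>simp add: ode[OF \<open>T \<le> x\<close>] field_simps\<close>)
  qed (use assms in \<open>simp add: mult_nonpos_nonneg\<close>)
  then have "g t - E / m \<le> (g T - E / m) * (exp (m * T) / exp (m * t))"
    by (simp add: h_def le_divide_eq)
  also have "exp (m * T) / exp (m * t) = exp (- m * (t - T))"
    by (simp add: exp_diff[symmetric] algebra_simps)
  finally show ?thesis by simp
qed

lemma linear_ode_abs_bound:
  fixes g g' e :: "real \<Rightarrow> real"
  assumes "m > 0" "0 \<le> T" "T \<le> t"
    and deriv: "\<And>x. T \<le> x \<Longrightarrow> (g has_real_derivative g' x) (at x within {0..})"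
    and ode: "\<And>x. T \<le> x \<Longrightarrow> g' x = - m * g x + e x"
    and bound: "\<And>x. T \<le> x \<Longrightarrow> \<bar>e x\<bar> \<le> E"
  shows "\<bar>g t\<bar> \<le> E / m + \<bar>g T\<bar> * exp (- m * (t - T))"
proof -
  have "E / m \<ge> 0" using bound[of T] \<open>m > 0\<close> by simp
  moreover have "exp (- m * (t - T)) \<le> 1" using assms(1,3) by simp
  moreover have "g t \<le> E / m + (g T - E / m) * exp (- m * (t - T))"
    using linear_ode_upper_bound[OF assms(1-3) deriv ode] bound by (simp add: abs_le_iff)
  moreover have "- g t \<le> E / m + (- g T - E / m) * exp (- m * (t - T))"
    by (rule linear_ode_upper_bound[OF assms(1-3), where g' = "\<lambda>x. - g' x" and e = "\<lambda>x. - e x"])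
      (use deriv ode bound in \<open>auto intro!: derivative_eq_intros simp: abs_le_iff\<close>)
  ultimately show ?thesis
    by (smt (verit, best) abs_ge_self abs_minus_cancel exp_gt_zero mult_right_mono)
qed

lemma linear_ode_abs_le:
  fixes g g' e :: "real \<Rightarrow> real"
  assumes "m > 0" "0 \<le> t"
    and "\<And>x. 0 \<le> x \<Longrightarrow> (g has_real_derivative g' x) (at x within {0..})"
    and "\<And>x. 0 \<le> x \<Longrightarrow> g' x = - m * g x + e x"
    and "\<And>x. 0 \<le> x \<Longrightarrow> \<bar>e x\<bar> \<le> E"
  shows "\<bar>g t\<bar> \<le> \<bar>g 0\<bar> + E / m"
proof -
  have "\<bar>g 0\<bar> * exp (- m * (t - 0)) \<le> \<bar>g 0\<bar>" using assms(1,2) by (simp add: mult_left_le)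
  then show ?thesis using linear_ode_abs_bound[OF assms(1) order.refl assms(2-5)] by simp
qed

lemma linear_ode_tendsto_zero:
  fixes g g' e :: "real \<Rightarrow> real"
  assumes "m > 0"
    and deriv: "\<And>x. 0 \<le> x \<Longrightarrow> (g has_real_derivative g' x) (at x within {0..})"
    and ode: "\<And>x. 0 \<le> x \<Longrightarrow> g' x = - m * g x + e x"
    and "(e \<longlongrightarrow> 0) at_top"
  shows "(g \<longlongrightarrow> 0) at_top"
proof (rule tendstoI)
  fix \<epsilon> :: real assume "\<epsilon> > 0"
  then have "\<forall>\<^sub>F x in at_top. \<bar>e x\<bar> < m * \<epsilon> / 2"
    using tendstoD[OF \<open>(e \<longlongrightarrow> 0) at_top\<close>, of "m * \<epsilon> / 2"] \<open>m > 0\<close> by simp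
  then obtain T where T: "T \<ge> 0" "\<And>x. T \<le> x \<Longrightarrow> \<bar>e x\<bar> \<le> m * \<epsilon> / 2"
    unfolding eventually_at_top_linorder by (metis less_imp_le max.boundedE nle_le)
  have "((\<lambda>t. \<bar>g T\<bar> * exp (- m * (t - T))) \<longlongrightarrow> 0) at_top" using \<open>m > 0\<close> by real_asymp
  then have "\<forall>\<^sub>F t in at_top. \<bar>g T\<bar> * exp (- m * (t - T)) < \<epsilon> / 2"
    by (rule order_tendstoD) (use \<open>\<epsilon> > 0\<close> in simp)
  moreover have "\<forall>\<^sub>F t in at_top. \<bar>g t\<bar> \<le> \<epsilon> / 2 + \<bar>g T\<bar> * exp (- m * (t - T))"
    unfolding eventually_at_top_linorder
    using linear_ode_abs_bound[OF \<open>m > 0\<close> \<open>T \<ge> 0\<close> _ deriv ode T(2)] T(1) \<open>m > 0\<close> by auto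
  ultimately show "\<forall>\<^sub>F t in at_top. dist (g t) 0 < \<epsilon>"
    by eventually_elim simp
qed

lemma nonneg_real_induct:
  fixes P :: "real \<Rightarrow> bool"
  assumes "P 0"
    and right: "\<And>t. 0 \<le> t \<Longrightarrow> P t \<Longrightarrow> eventually P (at_right t)"
    and left: "\<And>t. 0 < t \<Longrightarrow> (\<And>s. 0 \<le> s \<Longrightarrow> s < t \<Longrightarrow> P s) \<Longrightarrow> P t"
    and "0 \<le> t"
  shows "P t"
proof (rule ccontr)
  assume "\<not> P t"
  define B where "B = {s. 0 \<le> s \<and> \<not> P s}"
  define t0 where "t0 = Inf B"
  have "B \<noteq> {}" using \<open>\<not> P t\<close> \<open>0 \<le> t\<close> by (auto simp: B_def)
  have bdd: "bdd_below B" unfolding B_def by (rule bdd_belowI[of _ 0]) auto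
  have "t0 \<ge> 0" unfolding t0_def using \<open>B \<noteq> {}\<close> by (intro cInf_greatest) (auto simp: B_def)
  have before: "P s" if "0 \<le> s" "s < t0" for s
    using cInf_lower[OF _ bdd, of s] that by (force simp: B_def t0_def)
  have "P t0"
    using \<open>P 0\<close> \<open>t0 \<ge> 0\<close> left[of t0] before by (cases "t0 = 0") auto
  then obtain e where "e > t0" and after: "\<And>s. t0 < s \<Longrightarrow> s < e \<Longrightarrow> P s"
    using right[OF \<open>t0 \<ge> 0\<close>] by (auto simp: eventually_at_right_field)
  have "e \<le> t0" unfolding t0_def
  proof (rule cInf_greatest[OF \<open>B \<noteq> {}\<close>])
    fix x assume "x \<in> B"
    then have "t0 \<le> x" "\<not> P x" using cInf_lower[OF _ bdd] by (auto simp: B_def t0_def)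
    then show "e \<le> x" using after[of x] \<open>P t0\<close> by force
  qed
  then show False using \<open>e > t0\<close> by simp
qed

section \<open>Convergence criteria\<close>

lemma antimono_nonneg_tendsto_Inf:
  fixes f :: "real \<Rightarrow> real"
  assumes antimono: "\<And>s t. 0 \<le> s \<Longrightarrow> s \<le> t \<Longrightarrow> f t \<le> f s"
    and bounded: "\<And>t. 0 \<le> t \<Longrightarrow> B \<le> f t"
  shows "(f \<longlongrightarrow> Inf (f ` {0..})) at_top"
proof (rule decreasing_tendsto)
  have bdd: "bdd_below (f ` {0..})" using bounded by (intro bdd_belowI[of _ B]) auto
  then show "\<forall>\<^sub>F t in at_top. Inf (f ` {0..}) \<le> f t"
    unfolding eventually_at_top_linorder by (auto intro!: exI[of _ 0] cInf_lower)
  fix y assume "Inf (f ` {0..}) < y"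
  then obtain T where "T \<ge> 0" "f T < y" by (subst (asm) cInf_less_iff[OF _ bdd]) auto
  then show "\<forall>\<^sub>F t in at_top. f t < y"
    unfolding eventually_at_top_linorder using antimono by (meson order.strict_trans1)
qed

text \<open>A form of Barbalat's lemma: since \<open>f\<close> converges, the mean value theorem finds a point
  in every window \<open>[t, t + h]\<close> far out where \<open>f'\<close> is small, and uniform continuity of \<open>z\<close>
  spreads this smallness over the whole window.\<close>

lemma barbalat:
  fixes f f' z e :: "real \<Rightarrow> real"
  assumes "(f \<longlongrightarrow> L) at_top"
    and deriv: "\<And>x. 0 \<le> x \<Longrightarrow> (f has_real_derivative f' x) (at x within {0..})"
    and unif: "uniformly_continuous_on {0..} z"
    and dominated: "\<And>x. 0 \<le> x \<Longrightarrow> \<bar>z x\<bar> \<le> \<bar>f' x\<bar> + \<bar>e x\<bar>"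
    and "(e \<longlongrightarrow> 0) at_top"
  shows "(z \<longlongrightarrow> 0) at_top"
proof (rule tendstoI)
  fix \<epsilon> :: real assume "\<epsilon> > 0"
  obtain h where "h > 0" and h: "\<And>x y. x \<ge> 0 \<Longrightarrow> y \<ge> 0 \<Longrightarrow> \<bar>y - x\<bar> < h \<Longrightarrow> \<bar>z y - z x\<bar> < \<epsilon> / 2"
    using unif[unfolded uniformly_continuous_on_def, rule_format, of "\<epsilon> / 2"] \<open>\<epsilon> > 0\<close>
    by (auto simp: dist_real_def)
  have "((\<lambda>t. f (t + h) - f t) \<longlongrightarrow> L - L) at_top"
    by (intro tendsto_diff filterlim_compose[OF \<open>(f \<longlongrightarrow> L) at_top\<close>]
        assms(1)) real_asymp
  then have "\<forall>\<^sub>F t in at_top. dist (f (t + h) - f t) 0 < h * (\<epsilon> / 4)"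
    using \<open>h > 0\<close> \<open>\<epsilon> > 0\<close> by (intro tendstoD) simp_all
  moreover have "\<forall>\<^sub>F t in at_top. \<forall>\<xi>\<ge>t. \<bar>e \<xi>\<bar> < \<epsilon> / 4"
    using tendstoD[OF \<open>(e \<longlongrightarrow> 0) at_top\<close>, of "\<epsilon> / 4"] \<open>\<epsilon> > 0\<close>
    by (simp add: eventually_all_ge_at_top)
  moreover have "\<forall>\<^sub>F t in at_top. (t::real) > 0" by (rule eventually_gt_at_top)
  ultimately show "\<forall>\<^sub>F t in at_top. dist (z t) 0 < \<epsilon>"
  proof eventually_elim
    case (elim t)
    obtain \<xi> where \<xi>: "t < \<xi>" "\<xi> < t + h" "f (t + h) - f t = h * f' \<xi>"
      using MVT_nonneg[of t "t + h" f f'] \<open>h > 0\<close> elim(3) deriv by auto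
    have "\<bar>f' \<xi>\<bar> < \<epsilon> / 4"
      using elim(1) \<xi>(3) \<open>h > 0\<close> by (simp add: dist_real_def abs_mult)
    moreover have "\<bar>e \<xi>\<bar> < \<epsilon> / 4" using elim(2) \<xi>(1) by simp
    ultimately have "\<bar>z \<xi>\<bar> < \<epsilon> / 2"
      using dominated[of \<xi>] \<xi>(1) elim(3) by simp
    moreover have "\<bar>z \<xi> - z t\<bar> < \<epsilon> / 2" using h[of t \<xi>] \<xi> elim(3) by simp
    ultimately show ?case unfolding dist_real_def by linarith
  qed
qed

lemma tendsto_zero_if_square_le:
  fixes f g :: "real \<Rightarrow> real"
  assumes "\<And>t. 0 \<le> t \<Longrightarrow> (f t)\<^sup>2 \<le> K * g t" and "(g \<longlongrightarrow> 0) at_top"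
  shows "(f \<longlongrightarrow> 0) at_top"
proof (rule Lim_null_comparison)
  show "\<forall>\<^sub>F t in at_top. norm (f t) \<le> sqrt (K * g t)"
    using eventually_ge_at_top[of 0] by eventually_elim (use assms(1) in \<open>simp add: real_le_rsqrt\<close>)
  show "((\<lambda>t. sqrt (K * g t)) \<longlongrightarrow> 0) at_top"
    using tendsto_real_sqrt[OF tendsto_mult_right_zero[OF assms(2)]] by simp
qed

section \<open>Bounded Lipschitz functions\<close>

definition bounded_lipschitz_on :: "'a::metric_space set \<Rightarrow> ('a \<Rightarrow> real) \<Rightarrow> bool" where
  "bounded_lipschitz_on U f \<longleftrightarrow> (\<exists>L. L-lipschitz_on U f) \<and> bounded (f ` U)"

lemma bounded_lipschitz_on_uniformly_continuous:
  "bounded_lipschitz_on U f \<Longrightarrow> uniformly_continuous_on U f"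
  unfolding bounded_lipschitz_on_def using lipschitz_on_uniformly_continuous by blast

lemma bounded_lipschitz_on_const: "bounded_lipschitz_on U (\<lambda>x. c)"
  unfolding bounded_lipschitz_on_def using lipschitz_on_constant
  by (auto intro!: boundedI[of _ "\<bar>c\<bar>"])

lemma bounded_lipschitz_on_add:
  "bounded_lipschitz_on U f \<Longrightarrow> bounded_lipschitz_on U g \<Longrightarrow> bounded_lipschitz_on U (\<lambda>x. f x + g x)"
  unfolding bounded_lipschitz_on_def by (blast intro: lipschitz_on_add bounded_plus_comp)

lemma bounded_lipschitz_on_diff:
  "bounded_lipschitz_on U f \<Longrightarrow> bounded_lipschitz_on U g \<Longrightarrow> bounded_lipschitz_on U (\<lambda>x. f x - g x)"
  unfolding bounded_lipschitz_on_def by (blast intro: lipschitz_on_diff bounded_minus_comp)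

lemma bounded_lipschitz_on_mult:
  assumes "bounded_lipschitz_on U f" "bounded_lipschitz_on U g"
  shows "bounded_lipschitz_on U (\<lambda>x. f x * g x)"
proof -
  obtain Lf Lg Bf Bg where L: "Lf-lipschitz_on U f" "Lg-lipschitz_on U g"
    and "Bf > 0" "Bg > 0" and B: "\<And>x. x \<in> U \<Longrightarrow> \<bar>f x\<bar> \<le> Bf" "\<And>x. x \<in> U \<Longrightarrow> \<bar>g x\<bar> \<le> Bg"
    using assms unfolding bounded_lipschitz_on_def bounded_pos by auto
  have "(Bf * Lg + Bg * Lf)-lipschitz_on U (\<lambda>x. f x * g x)"
  proof (rule lipschitz_onI)
    fix x y assume "x \<in> U" "y \<in> U"
    have "dist (f x * g x) (f y * g y) = \<bar>f x * (g x - g y) + g y * (f x - f y)\<bar>"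
      by (simp add: dist_real_def algebra_simps)
    also have "\<dots> \<le> \<bar>f x\<bar> * dist (g x) (g y) + \<bar>g y\<bar> * dist (f x) (f y)"
      by (metis abs_mult abs_triangle_ineq dist_real_def)
    also have "\<dots> \<le> Bf * (Lg * dist x y) + Bg * (Lf * dist x y)"
      using B L \<open>x \<in> U\<close> \<open>y \<in> U\<close> \<open>Bf > 0\<close> \<open>Bg > 0\<close>
      by (intro add_mono mult_mono lipschitz_onD) auto
    finally show "dist (f x * g x) (f y * g y) \<le> (Bf * Lg + Bg * Lf) * dist x y"
      by (simp add: algebra_simps)
  qed (use \<open>Bf > 0\<close> \<open>Bg > 0\<close> lipschitz_on_nonneg[OF L(1)] lipschitz_on_nonneg[OF L(2)] in simp)
  moreover have "bounded ((\<lambda>x. f x * g x) ` U)"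
    using B \<open>Bf > 0\<close> by (intro boundedI[of _ "Bf * Bg"]) (auto simp: abs_mult intro!: mult_mono)
  ultimately show ?thesis unfolding bounded_lipschitz_on_def by blast
qed

lemma bounded_lipschitz_on_sum:
  "finite A \<Longrightarrow> (\<And>i. i \<in> A \<Longrightarrow> bounded_lipschitz_on U (f i))
    \<Longrightarrow> bounded_lipschitz_on U (\<lambda>x. \<Sum>i\<in>A. f i x)"
  by (induction A rule: finite_induct)
    (auto intro: bounded_lipschitz_on_add bounded_lipschitz_on_const[of _ 0, simplified])

lemma bounded_derivative_imp_bounded_lipschitz_on:
  fixes f f' :: "real \<Rightarrow> real"
  assumes "\<And>x. 0 \<le> x \<Longrightarrow> (f has_real_derivative f' x) (at x within {0..})"
    and "\<And>x. 0 \<le> x \<Longrightarrow> \<bar>f' x\<bar> \<le> M" and "\<And>x. 0 \<le> x \<Longrightarrow> \<bar>f x\<bar> \<le> B"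
  shows "bounded_lipschitz_on {0..} f"
proof -
  have "M-lipschitz_on {0..} f"
    using assms(1,2) order_trans[OF abs_ge_zero assms(2)[of 0]]
    by (intro bounded_derivative_imp_lipschitz)
      (auto simp: has_field_derivative_def abs_mult intro!: onorm_le mult_right_mono)
  moreover have "bounded (f ` {0..})" using assms(3) by (intro boundedI) auto
  ultimately show ?thesis unfolding bounded_lipschitz_on_def by blast
qed

section \<open>AM-GM and the Volterra function\<close>

lemma length_le_sum_list_if_prod_list_eq_1:
  fixes xs :: "real list"
  assumes "\<forall>x\<in>set xs. x > 0" and "prod_list xs = 1"
  shows "real (length xs) \<le> sum_list xs"
proof -
  have "prod_list xs > 0 \<and> ln (prod_list xs) \<le> sum_list xs - length xs"
    using assms(1)
  proof (induction xs)
    case (Cons x xs)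
    then show ?case using ln_le_minus_one[of x] by (simp add: ln_mult)
  qed simp
  then show ?thesis using assms(2) by simp
qed

definition volterra :: "real \<Rightarrow> real \<Rightarrow> real" where
  "volterra a x = x - a - a * ln (x / a)"

lemma volterra_nonneg: "0 < a \<Longrightarrow> 0 < x \<Longrightarrow> 0 \<le> volterra a x"
  using ln_le_minus_one[of "x / a"] by (simp add: volterra_def field_simps)

lemma volterra_le_square_div:
  assumes "0 < a" "0 < x"
  shows "volterra a x \<le> (x - a)\<^sup>2 / x"
proof -
  have "volterra a x = x - a + a * ln (a / x)"
    using assms by (simp add: volterra_def ln_div algebra_simps)
  also have "\<dots> \<le> x - a + a * (a / x - 1)"
    using assms by (intro add_left_mono mult_left_mono ln_le_minus_one) auto
  also have "\<dots> = (x - a)\<^sup>2 / x"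
    using assms by (simp add: field_simps power2_eq_square)
  finally show ?thesis .
qed

lemma volterra_le_linear:
  assumes "0 < e" "e \<le> a" "0 < x" "\<bar>x - a\<bar> < e / 2" "\<bar>x - a\<bar> \<le> 1"
  shows "volterra a x \<le> 2 / e * \<bar>x - a\<bar>"
proof -
  have "volterra a x \<le> \<bar>x - a\<bar> * \<bar>x - a\<bar> / x"
    using volterra_le_square_div[of a x] assms by (simp add: power2_eq_square)
  also have "\<dots> \<le> \<bar>x - a\<bar> / x"
    using assms by (intro divide_right_mono mult_left_le) auto
  also have "\<dots> \<le> \<bar>x - a\<bar> / (e / 2)"
    using assms abs_ge_minus_self[of "x - a"] by (intro divide_left_mono) auto
  finally show ?thesis by (simp add: mult.commute)
qed

lemma square_le_volterra:
  assumes "0 < a" "0 < x" "a \<le> 1" "x \<le> 1"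
  shows "(x - a)\<^sup>2 \<le> 4 * volterra a x"
proof -
  define u v where "u = sqrt x" "v = sqrt a"
  have uv: "u > 0" "v > 0" "u \<le> 1" "v \<le> 1" and x: "x = u\<^sup>2" and a: "a = v\<^sup>2"
    using assms by (auto simp: u_v_def)
  have "(u - v)\<^sup>2 = u\<^sup>2 - v\<^sup>2 - 2 * v\<^sup>2 * (u / v - 1)"
    using uv by (simp add: field_simps power2_eq_square)
  also have "\<dots> \<le> u\<^sup>2 - v\<^sup>2 - 2 * v\<^sup>2 * ln (u / v)"
    using uv by (intro diff_left_mono mult_left_mono ln_le_minus_one) auto
  also have "\<dots> = volterra a x"
    using uv unfolding volterra_def x a by (simp add: power_divide[symmetric] ln_realpow)
  finally have "(u - v)\<^sup>2 \<le> volterra a x" .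
  moreover have "(u + v)\<^sup>2 \<le> 4"
    using power_mono[of "u + v" 2 2] uv by simp
  moreover have "(x - a)\<^sup>2 = (u - v)\<^sup>2 * (u + v)\<^sup>2"
    unfolding x a by (simp add: power2_eq_square algebra_simps)
  ultimately show ?thesis
    by (metis mult.commute mult_mono zero_le_power2 zero_le_numeral)
qed

lemma DERIV_volterra:
  assumes "(f has_real_derivative f') (at t within s)" "f t > 0" "a > 0"
  shows "((\<lambda>x. volterra a (f x)) has_real_derivative (1 - a / f t) * f') (at t within s)"
  unfolding volterra_def using assms
  by (auto intro!: derivative_eq_intros simp: field_simps)

section \<open>The Lyapunov derivative within one degree class\<close>

lemma class_lyapunov_identity:
  fixes S V I th Se Ve Ie the lam mu Lam d \<omega> \<alpha> \<delta> D :: real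
  assumes pos: "S > 0" "V > 0" "I > 0" "th > 0" "Se > 0" "Ve > 0" "Ie > 0" "the > 0"
    and eqS: "Lam - lam * Se * the + \<omega> * Ve - (mu + d) * Se = 0"
    and eqV: "mu * Se - \<delta> * lam * Ve * the - (d + \<omega> + \<alpha>) * Ve = 0"
    and eqI: "lam * Se * the + \<delta> * lam * Ve * the - D * Ie = 0"
  shows "(1 - Se / S) * (Lam - lam * S * th + \<omega> * V - (mu + d) * S)
       + (1 - Ve / V) * (mu * S - \<delta> * lam * V * th - (d + \<omega> + \<alpha>) * V)
       + (1 - Ie / I) * (lam * S * th + \<delta> * lam * V * th - D * I)
     = d * Se * (2 - S / Se - Se / S)
       + (d + \<alpha>) * Ve * (3 - Se / S - V / Ve - (S / Se) / (V / Ve))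
       + \<omega> * Ve * (2 - (V / Ve) / (S / Se) - (S / Se) / (V / Ve))
       + lam * Se * the * (2 - Se / S + th / the - (S / Se) * (th / the) / (I / Ie) - I / Ie)
       + \<delta> * lam * Ve * the * (3 - Se / S - (S / Se) / (V / Ve) + th / the
                                - (V / Ve) * (th / the) / (I / Ie) - I / Ie)"
proof -
  have Lam: "Lam = lam * Se * the - \<omega> * Ve + (mu + d) * Se"
    using eqS by simp
  have mu: "mu = (\<delta> * lam * Ve * the + (d + \<omega> + \<alpha>) * Ve) / Se"
    using eqV pos by (simp add: field_simps)
  have D: "D = (lam * Se * the + \<delta> * lam * Ve * the) / Ie"
    using eqI pos by (simp add: field_simps)
  show ?thesis unfolding Lam D mu using pos by (simp add: field_simps)
qed

lemma am_gm_brackets: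
  fixes x y z u :: real
  assumes "x > 0" "y > 0" "z > 0" "u > 0"
  shows "3 - 1 / x - y - x / y \<le> 0"
    and "2 - 1 / x - x * u / z \<le> z / u - 1"
    and "3 - 1 / x - x / y - y * u / z \<le> z / u - 1"
proof -
  have amgm3: "3 \<le> a + b + c" if "a > 0" "b > 0" "c > 0" "a * b * c = 1" for a b c :: real
    using length_le_sum_list_if_prod_list_eq_1[of "[a, b, c]"] that by (simp add: mult.assoc)
  have amgm4: "4 \<le> a + b + c + e" if "a > 0" "b > 0" "c > 0" "e > 0" "a * b * c * e = 1"
    for a b c e :: real
    using length_le_sum_list_if_prod_list_eq_1[of "[a, b, c, e]"] that by (simp add: mult.assoc)
  show "3 - 1 / x - y - x / y \<le> 0" using amgm3[of "1 / x" y "x / y"] assms by simp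
  show "2 - 1 / x - x * u / z \<le> z / u - 1" using amgm3[of "1 / x" "x * u / z" "z / u"] assms by simp
  show "3 - 1 / x - x / y - y * u / z \<le> z / u - 1"
    using amgm4[of "1 / x" "x / y" "y * u / z" "z / u"] assms by simp
qed

lemma quadratic_brackets_le:
  fixes S V Se Ve d \<omega> :: real
  assumes pos: "0 < S" "0 < V" "0 < Se" "0 < Ve" and le1: "S \<le> 1" "V \<le> 1"
    and par: "0 < d" "0 < \<omega>"
  shows "d * Se * (2 - S / Se - Se / S) \<le> - d * (S - Se)\<^sup>2"
    and "\<omega> * Ve * (2 - (V / Ve) / (S / Se) - (S / Se) / (V / Ve))
      \<le> - \<omega> / Se * (S * Ve - V * Se)\<^sup>2"
proof -
  have "d * (S - Se)\<^sup>2 \<le> d * (S - Se)\<^sup>2 / S"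
    using pos le1 par by (simp add: le_divide_eq mult_left_le)
  moreover have "d * Se * (2 - S / Se - Se / S) = - d * (S - Se)\<^sup>2 / S"
    using pos by (simp add: field_simps power2_eq_square)
  ultimately show "d * Se * (2 - S / Se - Se / S) \<le> - d * (S - Se)\<^sup>2" by simp
  have "S * V \<le> 1" using le1 pos by (simp add: mult_le_one)
  then have "\<omega> / Se * (S * Ve - V * Se)\<^sup>2 \<le> \<omega> / Se * (S * Ve - V * Se)\<^sup>2 / (S * V)"
    using pos par by (simp add: le_divide_eq mult_left_le)
  moreover have "\<omega> * Ve * (2 - (V / Ve) / (S / Se) - (S / Se) / (V / Ve))
      = - \<omega> / Se * (S * Ve - V * Se)\<^sup>2 / (S * V)"
    using pos by (simp add: field_simps power2_eq_square)
  ultimately show "\<omega> * Ve * (2 - (V / Ve) / (S / Se) - (S / Se) / (V / Ve))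
      \<le> - \<omega> / Se * (S * Ve - V * Se)\<^sup>2"
    by simp
qed

text \<open>Each bracket of \<open>class_lyapunov_identity\<close> is controlled by AM-GM; the \<open>\<Theta>\<close>-dependent remainder
  has the form \<open>D Ie (\<theta> - \<iota> + \<iota> / \<theta> - 1)\<close> with \<open>\<theta> = th / the\<close>, \<open>\<iota> = I / Ie\<close>, and cancels only
  after summation over the degree classes.\<close>

lemma class_lyapunov_estimate:
  fixes S V I th Se Ve Ie the lam mu Lam d \<omega> \<alpha> \<delta> D :: real
  assumes pos: "S > 0" "V > 0" "I > 0" "th > 0" "Se > 0" "Ve > 0" "Ie > 0" "the > 0"
    and par: "lam > 0" "d > 0" "\<omega> > 0" "\<alpha> > 0" "\<delta> \<ge> 0" and le1: "S \<le> 1" "V \<le> 1"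
    and eqS: "Lam - lam * Se * the + \<omega> * Ve - (mu + d) * Se = 0"
    and eqV: "mu * Se - \<delta> * lam * Ve * the - (d + \<omega> + \<alpha>) * Ve = 0"
    and eqI: "lam * Se * the + \<delta> * lam * Ve * the - D * Ie = 0"
  shows "(1 - Se / S) * (Lam - lam * S * th + \<omega> * V - (mu + d) * S)
       + (1 - Ve / V) * (mu * S - \<delta> * lam * V * th - (d + \<omega> + \<alpha>) * V)
       + (1 - Ie / I) * (lam * S * th + \<delta> * lam * V * th - D * I)
     \<le> - (d * (S - Se)\<^sup>2 + \<omega> / Se * (S * Ve - V * Se)\<^sup>2)
       + D * Ie * (th / the - I / Ie + (I / Ie) * (the / th) - 1)"
proof -
  define x y z u where "x = S / Se" "y = V / Ve" "z = I / Ie" "u = th / the"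
  have xyzu: "x > 0" "y > 0" "z > 0" "u > 0" using pos by (auto simp: x_y_z_u_def)
  note quadratic = quadratic_brackets_le[OF pos(1,2,5,6) le1 par(2,3)]
  have S_term: "d * Se * (2 - x - 1 / x) \<le> - d * (S - Se)\<^sup>2"
    using quadratic(1) by (simp add: x_y_z_u_def)
  have V_term: "(d + \<alpha>) * Ve * (3 - 1 / x - y - x / y) \<le> 0"
    using am_gm_brackets(1)[OF xyzu] pos par by (simp add: mult_nonneg_nonpos)
  have SV_term: "\<omega> * Ve * (2 - y / x - x / y) \<le> - \<omega> / Se * (S * Ve - V * Se)\<^sup>2"
    using quadratic(2) unfolding x_y_z_u_def by simp
  have "lam * Se * the * (2 - 1 / x + u - x * u / z - z)
      + \<delta> * lam * Ve * the * (3 - 1 / x - x / y + u - y * u / z - z)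
      \<le> (lam * Se * the + \<delta> * lam * Ve * the) * (z / u - 1 + u - z)"
    using am_gm_brackets(2,3)[OF xyzu] pos par
    by (simp add: distrib_right) (intro add_mono mult_left_mono; simp)
  also have "\<dots> = D * Ie * (th / the - I / Ie + (I / Ie) * (the / th) - 1)"
    using eqI pos by (simp add: x_y_z_u_def field_simps)
  finally have infection_terms: "lam * Se * the * (2 - 1 / x + u - x * u / z - z)
      + \<delta> * lam * Ve * the * (3 - 1 / x - x / y + u - y * u / z - z)
      \<le> D * Ie * (th / the - I / Ie + (I / Ie) * (the / th) - 1)" .
  have "(1 - Se / S) * (Lam - lam * S * th + \<omega> * V - (mu + d) * S)
       + (1 - Ve / V) * (mu * S - \<delta> * lam * V * th - (d + \<omega> + \<alpha>) * V)
       + (1 - Ie / I) * (lam * S * th + \<delta> * lam * V * th - D * I)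
     = d * Se * (2 - x - 1 / x) + (d + \<alpha>) * Ve * (3 - 1 / x - y - x / y)
       + \<omega> * Ve * (2 - y / x - x / y) + lam * Se * the * (2 - 1 / x + u - x * u / z - z)
       + \<delta> * lam * Ve * the * (3 - 1 / x - x / y + u - y * u / z - z)"
    unfolding class_lyapunov_identity[OF pos eqS eqV eqI] x_y_z_u_def
    using pos by (simp add: field_simps)
  with S_term V_term SV_term infection_terms show ?thesis by linarith
qed

section \<open>The endemic equilibrium\<close>

locale sviqr_equilibrium =
  fixes n :: nat and p lam phi mu :: "nat \<Rightarrow> real"
    and b d Phi alpha beta gamma eta omega delta :: real
    and Se Ve Ie Qe Rst :: "nat \<Rightarrow> real"
  assumes n_ge: "n \<ge> 1"
    and p_pos: "\<forall>k\<in>{1..n}. p k > 0"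
    and bd: "b > d" and d_pos: "d > 0"
    and Phi_pos: "Phi > 0"
    and par_pos: "\<forall>k\<in>{1..n}. lam k > 0 \<and> phi k > 0 \<and> mu k > 0"
    and const_pos: "alpha > 0" "beta > 0" "gamma > 0" "eta > 0" "omega > 0"
    and delta: "0 \<le> delta" "delta \<le> 1"
    and Eq: "is_endemic_equilibrium n p lam phi mu b d Phi alpha beta gamma eta omega delta
               Se Ve Ie Qe Rst"
begin

definition c :: "nat \<Rightarrow> real" where "c k = phi k * p k / avgdeg n p"
definition D :: real where "D = gamma + beta + d"
definition Theta_e :: real where "Theta_e = Theta n p phi Ie"
definition c_sum :: real where "c_sum = (\<Sum>k=1..n. c k)"

lemma
  assumes "k \<in> {1..n}"
  shows lam_pos: "lam k > 0" and phi_pos: "phi k > 0" and mu_pos: "mu k > 0"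
  using par_pos assms by auto

lemma avgdeg_pos: "avgdeg n p > 0"
  unfolding avgdeg_def using p_pos n_ge by (intro sum_pos) auto

lemma Theta_eq_weighted_sum: "Theta n p phi X = (\<Sum>i=1..n. c i * X i)"
  unfolding Theta_def c_def by (simp add: sum_distrib_left)

lemma c_pos: "k \<in> {1..n} \<Longrightarrow> c k > 0"
  unfolding c_def using avgdeg_pos p_pos phi_pos by auto

lemma c_le_c_sum: "k \<in> {1..n} \<Longrightarrow> c k \<le> c_sum"
  unfolding c_sum_def by (rule member_le_sum) (use c_pos in \<open>auto intro: less_imp_le\<close>)

lemma D_pos: "D > 0" unfolding D_def using const_pos d_pos by simp

lemma Nstar_bounds: assumes "k \<in> {1..n}" shows "0 < Nstar b d Phi k \<and> Nstar b d Phi k < 1"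
proof -
  have "b * real k * Phi > 0" using assms bd d_pos Phi_pos by auto
  then show ?thesis unfolding Nstar_def using d_pos by simp
qed

lemma Lam_eq: "Lam b d Phi k = d * Nstar b d Phi k"
proof -
  have "d + b * real k * Phi > 0" using bd d_pos Phi_pos by (intro add_pos_nonneg) auto
  then show ?thesis unfolding Lam_def Nstar_def by (simp add: field_simps)
qed

lemma Lam_pos: "k \<in> {1..n} \<Longrightarrow> Lam b d Phi k > 0"
  using Nstar_bounds d_pos unfolding Lam_eq by simp

lemma Theta_e_pos: "Theta_e > 0"
  using Eq unfolding is_endemic_equilibrium_def Theta_e_def by simp

lemma
  assumes "k \<in> {1..n}"
  shows eq_S: "Lam b d Phi k - lam k * Se k * Theta_e + omega * Ve k - (mu k + d) * Se k = 0"
    and eq_V: "mu k * Se k - delta * lam k * Ve k * Theta_e - (d + omega + alpha) * Ve k = 0"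
    and eq_I: "lam k * Se k * Theta_e + delta * lam k * Ve k * Theta_e - D * Ie k = 0"
    and eq_Q: "beta * Ie k - (eta + d) * Qe k = 0"
    and eq_R: "gamma * Ie k + eta * Qe k + alpha * Ve k - d * Rst k = 0"
    and equilibrium_nonneg: "Se k \<ge> 0" "Ve k \<ge> 0" "Ie k \<ge> 0" "Qe k \<ge> 0" "Rst k \<ge> 0"
  using Eq assms
  unfolding is_endemic_equilibrium_def rhsS_def rhsV_def rhsI_def rhsQ_def rhsR_def
    Theta_e_def D_def
  by auto

lemma Se_pos: assumes "k \<in> {1..n}" shows "Se k > 0"
proof -
  have "(lam k * Theta_e + mu k + d) * Se k = Lam b d Phi k + omega * Ve k"
    using eq_S[OF assms] by (simp add: algebra_simps)
  moreover have "Lam b d Phi k + omega * Ve k > 0"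
    using Lam_pos[OF assms] equilibrium_nonneg[OF assms] const_pos by (simp add: add_pos_nonneg)
  moreover have "lam k * Theta_e + mu k + d > 0"
    using lam_pos[OF assms] mu_pos[OF assms] Theta_e_pos d_pos by (simp add: add_pos_pos)
  ultimately show ?thesis by (metis zero_less_mult_pos)
qed

lemma Ve_pos: assumes "k \<in> {1..n}" shows "Ve k > 0"
proof -
  have "(delta * lam k * Theta_e + (d + omega + alpha)) * Ve k = mu k * Se k"
    using eq_V[OF assms] by (simp add: algebra_simps)
  moreover have "mu k * Se k > 0" using Se_pos[OF assms] mu_pos[OF assms] by simp
  moreover have "delta * lam k * Theta_e + (d + omega + alpha) > 0"
    using lam_pos[OF assms] Theta_e_pos d_pos delta const_pos by (intro add_nonneg_pos) simp_all
  ultimately show ?thesis by (metis zero_less_mult_pos)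
qed

lemma Ie_pos: assumes "k \<in> {1..n}" shows "Ie k > 0"
proof -
  have "D * Ie k = lam k * Se k * Theta_e + delta * lam k * Ve k * Theta_e"
    using eq_I[OF assms] by simp
  moreover have "lam k * Se k * Theta_e + delta * lam k * Ve k * Theta_e > 0"
    using lam_pos[OF assms] Se_pos[OF assms] Ve_pos[OF assms] Theta_e_pos delta
    by (intro add_pos_nonneg) simp_all
  ultimately show ?thesis using D_pos by (metis zero_less_mult_pos)
qed

lemma equilibrium_le_1: assumes "k \<in> {1..n}" shows "Se k \<le> 1" "Ve k \<le> 1" "Ie k \<le> 1"
proof -
  have "d * (Se k + Ve k + Ie k + Qe k + Rst k) = d * Nstar b d Phi k"
    using eq_S[OF assms] eq_V[OF assms] eq_I[OF assms] eq_Q[OF assms] eq_R[OF assms] Lam_eq[of k]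
    unfolding D_def by (simp add: algebra_simps)
  then have "Se k + Ve k + Ie k + Qe k + Rst k < 1" using d_pos Nstar_bounds[OF assms] by simp
  then show "Se k \<le> 1" "Ve k \<le> 1" "Ie k \<le> 1" using equilibrium_nonneg[OF assms] by linarith+
qed

end

section \<open>Solutions: invariance, positivity and boundedness\<close>

locale sviqr_solution = sviqr_equilibrium +
  fixes S V I Q R :: "real \<Rightarrow> nat \<Rightarrow> real"
  assumes solution: "is_solution n p lam phi mu b d Phi alpha beta gamma eta omega delta S V I Q R"
    and admissible: "admissible_init n b d Phi (S 0) (V 0) (I 0) (Q 0) (R 0)"
begin

definition theta :: "real \<Rightarrow> real" where "theta t = Theta n p phi (I t)"

definition fS :: "real \<Rightarrow> nat \<Rightarrow> real" where
  "fS t k = rhsS n p lam phi mu b d Phi omega (S t) (V t) (I t) k"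
definition fV :: "real \<Rightarrow> nat \<Rightarrow> real" where
  "fV t k = rhsV n p lam phi mu d alpha omega delta (S t) (V t) (I t) k"
definition fI :: "real \<Rightarrow> nat \<Rightarrow> real" where
  "fI t k = rhsI n p lam phi d beta gamma delta (S t) (V t) (I t) k"
definition fQ :: "real \<Rightarrow> nat \<Rightarrow> real" where
  "fQ t k = rhsQ d beta eta (I t) (Q t) k"
definition fR :: "real \<Rightarrow> nat \<Rightarrow> real" where
  "fR t k = rhsR d alpha gamma eta (V t) (I t) (Q t) (R t) k"

lemma theta_eq_weighted_sum: "theta t = (\<Sum>i=1..n. c i * I t i)"
  unfolding theta_def Theta_eq_weighted_sum ..

lemma fS_eq: "fS t k = Lam b d Phi k - lam k * S t k * theta t + omega * V t k - (mu k + d) * S t k"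
  unfolding fS_def rhsS_def theta_def ..
lemma fV_eq: "fV t k = mu k * S t k - delta * lam k * V t k * theta t - (d + omega + alpha) * V t k"
  unfolding fV_def rhsV_def theta_def ..
lemma fI_eq: "fI t k = lam k * S t k * theta t + delta * lam k * V t k * theta t - D * I t k"
  unfolding fI_def rhsI_def theta_def D_def ..
lemma fQ_eq: "fQ t k = beta * I t k - (eta + d) * Q t k"
  unfolding fQ_def rhsQ_def ..
lemma fR_eq: "fR t k = gamma * I t k + eta * Q t k + alpha * V t k - d * R t k"
  unfolding fR_def rhsR_def ..

lemma
  assumes "0 \<le> t" "k \<in> {1..n}"
  shows S_deriv: "((\<lambda>\<tau>. S \<tau> k) has_real_derivative fS t k) (at t within {0..})"
    and V_deriv: "((\<lambda>\<tau>. V \<tau> k) has_real_derivative fV t k) (at t within {0..})"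
    and I_deriv: "((\<lambda>\<tau>. I \<tau> k) has_real_derivative fI t k) (at t within {0..})"
    and Q_deriv: "((\<lambda>\<tau>. Q \<tau> k) has_real_derivative fQ t k) (at t within {0..})"
    and R_deriv: "((\<lambda>\<tau>. R \<tau> k) has_real_derivative fR t k) (at t within {0..})"
  using solution assms unfolding is_solution_def fS_def fV_def fI_def fQ_def fR_def by blast+

lemma
  assumes "k \<in> {1..n}"
  shows init_pos: "S 0 k > 0" "V 0 k > 0" "I 0 k > 0" "Q 0 k > 0" "R 0 k > 0"
    and init_total: "S 0 k + V 0 k + I 0 k + Q 0 k + R 0 k = Nstar b d Phi k"
  using admissible assms unfolding admissible_init_def by auto

lemma class_total:
  assumes "0 \<le> t" "k \<in> {1..n}"
  shows "S t k + V t k + I t k + Q t k + R t k = Nstar b d Phi k"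
proof -
  define g where "g x = S x k + V x k + I x k + Q x k + R x k - Nstar b d Phi k" for x
  have "\<bar>g t\<bar> \<le> 0 / d + \<bar>g 0\<bar> * exp (- d * (t - 0))"
  proof (rule linear_ode_abs_bound[OF d_pos order.refl \<open>0 \<le> t\<close>])
    fix x :: real assume "0 \<le> x"
    show "(g has_real_derivative fS x k + fV x k + fI x k + fQ x k + fR x k) (at x within {0..})"
      unfolding g_def
      using S_deriv[OF \<open>0 \<le> x\<close> assms(2)] V_deriv[OF \<open>0 \<le> x\<close> assms(2)] I_deriv[OF \<open>0 \<le> x\<close> assms(2)]
        Q_deriv[OF \<open>0 \<le> x\<close> assms(2)] R_deriv[OF \<open>0 \<le> x\<close> assms(2)]
      by (auto intro!: derivative_eq_intros)
    show "fS x k + fV x k + fI x k + fQ x k + fR x k = - d * g x + 0"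
      unfolding g_def fS_eq fV_eq fI_eq fQ_eq fR_eq Lam_eq D_def by (simp add: algebra_simps)
  qed simp
  moreover have "g 0 = 0" using init_total[OF assms(2)] by (simp add: g_def)
  ultimately show ?thesis by (simp add: g_def)
qed

definition state_pos :: "real \<Rightarrow> bool" where
  "state_pos t \<longleftrightarrow> (\<forall>k\<in>{1..n}. S t k > 0 \<and> V t k > 0 \<and> I t k > 0 \<and> Q t k > 0 \<and> R t k > 0)"

lemma state_pos_right:
  assumes "0 \<le> t" "state_pos t"
  shows "eventually state_pos (at_right t)"
proof -
  have pos_near: "eventually (\<lambda>s. f s > 0) (at_right t)"
    if "(f has_real_derivative f') (at t within {0..})" "f t > 0" for f :: "real \<Rightarrow> real" and f'
  proof -
    have "(f \<longlongrightarrow> f t) (at t within {0..})"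
      using DERIV_continuous[OF that(1)] by (simp add: continuous_within)
    then have "(f \<longlongrightarrow> f t) (at_right t)"
      by (rule tendsto_within_subset) (use \<open>0 \<le> t\<close> in auto)
    then show ?thesis using that(2) by (rule order_tendstoD)
  qed
  have "\<forall>k\<in>{1..n}. eventually (\<lambda>s. S s k > 0 \<and> V s k > 0 \<and> I s k > 0 \<and> Q s k > 0 \<and> R s k > 0)
      (at_right t)"
    using assms unfolding state_pos_def
    by (auto intro!: eventually_conj pos_near S_deriv V_deriv I_deriv Q_deriv R_deriv)
  then show ?thesis unfolding state_pos_def by (rule eventually_ball_finite[rotated]) simp
qed

lemma state_pos_bounds:
  assumes "0 \<le> t" "state_pos t" "k \<in> {1..n}"
  shows "S t k < 1" "V t k < 1" "I t k < 1" "Q t k < 1" "R t k < 1"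
    and "0 < theta t" "theta t \<le> c_sum"
proof -
  have pos: "\<And>j. j \<in> {1..n} \<Longrightarrow> S t j > 0 \<and> V t j > 0 \<and> I t j > 0 \<and> Q t j > 0 \<and> R t j > 0"
    using assms(2) unfolding state_pos_def by blast
  have lt1: "\<And>j. j \<in> {1..n} \<Longrightarrow> S t j < 1 \<and> V t j < 1 \<and> I t j < 1 \<and> Q t j < 1 \<and> R t j < 1"
    using class_total[OF assms(1)] Nstar_bounds pos by (smt (verit))
  then show "S t k < 1" "V t k < 1" "I t k < 1" "Q t k < 1" "R t k < 1" using assms(3) by auto
  show "0 < theta t"
    unfolding theta_eq_weighted_sum using n_ge c_pos pos by (intro sum_pos) auto
  show "theta t \<le> c_sum"
    unfolding theta_eq_weighted_sum c_sum_def
    using c_pos lt1 by (intro sum_mono) (simp add: mult_left_le less_imp_le)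
qed

lemma rhs_ge_linear:
  assumes "0 \<le> x" "state_pos x" "k \<in> {1..n}"
  shows "0 \<le> fS x k + (lam k * c_sum + mu k + d) * S x k"
    and "0 \<le> fV x k + (delta * lam k * c_sum + (d + omega + alpha)) * V x k"
    and "0 \<le> fI x k + D * I x k"
    and "0 \<le> fQ x k + (eta + d) * Q x k"
    and "0 \<le> fR x k + d * R x k"
proof -
  have pos: "S x k > 0" "V x k > 0" "I x k > 0" "Q x k > 0" "R x k > 0"
    using assms(2,3) unfolding state_pos_def by auto
  have theta: "0 < theta x" "theta x \<le> c_sum" using state_pos_bounds[OF assms] by auto
  note rates = lam_pos[OF assms(3)] mu_pos[OF assms(3)] Lam_pos[OF assms(3)]
    const_pos d_pos delta(1)
  have "lam k * S x k * theta x \<le> lam k * S x k * c_sum"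
    using pos theta rates by (intro mult_left_mono) auto
  moreover have "fS x k + (lam k * c_sum + mu k + d) * S x k
      = Lam b d Phi k + omega * V x k + (lam k * S x k * c_sum - lam k * S x k * theta x)"
    unfolding fS_eq by (simp add: algebra_simps)
  ultimately show "0 \<le> fS x k + (lam k * c_sum + mu k + d) * S x k"
    using pos rates mult_pos_pos[of omega "V x k"] by linarith
  have "delta * lam k * V x k * theta x \<le> delta * lam k * V x k * c_sum"
    using pos theta rates by (intro mult_left_mono) auto
  moreover have "fV x k + (delta * lam k * c_sum + (d + omega + alpha)) * V x k
      = mu k * S x k + (delta * lam k * V x k * c_sum - delta * lam k * V x k * theta x)"
    unfolding fV_eq by (simp add: algebra_simps)
  ultimately show "0 \<le> fV x k + (delta * lam k * c_sum + (d + omega + alpha)) * V x k"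
    using pos rates mult_pos_pos[of "mu k" "S x k"] by linarith
  show "0 \<le> fI x k + D * I x k" "0 \<le> fQ x k + (eta + d) * Q x k" "0 \<le> fR x k + d * R x k"
    unfolding fI_eq fQ_eq fR_eq using pos theta rates by simp_all
qed

text \<open>Before the first time some component vanishes, all components are positive and hence,
  by \<open>class_total\<close>, below \<open>1\<close>; then \<open>rhs_ge_linear\<close> bounds each derivative from below by a
  linear function of the component itself, which cannot reach \<open>0\<close> in finite time.\<close>

lemma state_pos_left:
  assumes "0 < t" and before: "\<And>s. 0 \<le> s \<Longrightarrow> s < t \<Longrightarrow> state_pos s"
  shows "state_pos t"
  unfolding state_pos_def
proof (intro ballI conjI)
  fix k assume k: "k \<in> {1..n}"
  note ge = rhs_ge_linear[OF less_imp_le before k] and init = init_pos[OF k]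
  show "S t k > 0"
    by (rule DERIV_ge_linear_imp_pos[where f = "\<lambda>x. S x k" and f' = "\<lambda>x. fS x k"])
      (use assms(1) S_deriv[OF _ k] ge(1) init in auto)
  show "V t k > 0"
    by (rule DERIV_ge_linear_imp_pos[where f = "\<lambda>x. V x k" and f' = "\<lambda>x. fV x k"])
      (use assms(1) V_deriv[OF _ k] ge(2) init in auto)
  show "I t k > 0"
    by (rule DERIV_ge_linear_imp_pos[where f = "\<lambda>x. I x k" and f' = "\<lambda>x. fI x k"])
      (use assms(1) I_deriv[OF _ k] ge(3) init in auto)
  show "Q t k > 0"
    by (rule DERIV_ge_linear_imp_pos[where f = "\<lambda>x. Q x k" and f' = "\<lambda>x. fQ x k"])
      (use assms(1) Q_deriv[OF _ k] ge(4) init in auto)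
  show "R t k > 0"
    by (rule DERIV_ge_linear_imp_pos[where f = "\<lambda>x. R x k" and f' = "\<lambda>x. fR x k"])
      (use assms(1) R_deriv[OF _ k] ge(5) init in auto)
qed

lemma state_pos: "0 \<le> t \<Longrightarrow> state_pos t"
  by (rule nonneg_real_induct[where P = state_pos])
    (use init_pos state_pos_right state_pos_left in \<open>auto simp: state_pos_def\<close>)

lemma
  assumes "0 \<le> t" "k \<in> {1..n}"
  shows S_pos: "0 < S t k" and V_pos: "0 < V t k" and I_pos: "0 < I t k"
    and S_lt_1: "S t k < 1" and V_lt_1: "V t k < 1" and I_lt_1: "I t k < 1"
  using state_pos[OF assms(1)] state_pos_bounds[OF assms(1) state_pos[OF assms(1)] assms(2)]
    assms(2)
  unfolding state_pos_def by auto

lemma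
  assumes "0 \<le> t"
  shows theta_pos: "0 < theta t" and theta_le_c_sum: "theta t \<le> c_sum"
  using state_pos_bounds[OF assms state_pos[OF assms], of 1] n_ge by auto

lemma rhs_bounded:
  assumes "0 \<le> t" "k \<in> {1..n}"
  shows "\<bar>fS t k\<bar> \<le> Lam b d Phi k + lam k * c_sum + omega + (mu k + d)"
    and "\<bar>fV t k\<bar> \<le> mu k + delta * lam k * c_sum + (d + omega + alpha)"
    and "\<bar>fI t k\<bar> \<le> lam k * c_sum + delta * lam k * c_sum + D"
proof -
  have unit: "0 < S t k" "S t k < 1" "0 < V t k" "V t k < 1" "0 < I t k" "I t k < 1"
    using assms S_pos V_pos I_pos S_lt_1 V_lt_1 I_lt_1 by auto
  have theta: "0 < theta t" "theta t \<le> c_sum" using theta_pos theta_le_c_sum assms(1) by auto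
  have prod: "0 \<le> l * x * theta t" "l * x * theta t \<le> l * c_sum"
    if "0 < x" "x < 1" "0 \<le> l" for l x
  proof -
    have "x * theta t \<le> 1 * c_sum" using that theta by (intro mult_mono) auto
    then show "l * x * theta t \<le> l * c_sum" using that by (simp add: mult.assoc mult_left_mono)
  qed (use that theta in simp)
  have lin: "0 \<le> l * x" "l * x \<le> l" if "0 < x" "x < 1" "0 \<le> l" for l x :: real
    using that mult_left_le[of x l] by simp_all
  have lamk: "0 \<le> lam k" "0 \<le> delta * lam k" using lam_pos[OF assms(2)] delta by simp_all
  have rates: "0 \<le> omega" "0 \<le> mu k + d" "0 \<le> mu k" "0 \<le> d + omega + alpha" "0 \<le> D"
    using const_pos d_pos mu_pos[OF assms(2)] D_pos by simp_all
  note S_inf = prod[OF unit(1,2) lamk(1)] and V_inf = prod[OF unit(3,4) lamk(2)]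
  show "\<bar>fS t k\<bar> \<le> Lam b d Phi k + lam k * c_sum + omega + (mu k + d)"
    unfolding fS_eq abs_le_iff
    using S_inf lin[OF unit(3,4) rates(1)] lin[OF unit(1,2) rates(2)] Lam_pos[OF assms(2)]
    by linarith
  show "\<bar>fV t k\<bar> \<le> mu k + delta * lam k * c_sum + (d + omega + alpha)"
    unfolding fV_eq abs_le_iff
    using V_inf lin[OF unit(1,2) rates(3)] lin[OF unit(3,4) rates(4)] by linarith
  show "\<bar>fI t k\<bar> \<le> lam k * c_sum + delta * lam k * c_sum + D"
    unfolding fI_eq abs_le_iff using S_inf V_inf lin[OF unit(5,6) rates(5)] by linarith
qed

lemma
  assumes "k \<in> {1..n}"
  shows S_lipschitz: "bounded_lipschitz_on {0..} (\<lambda>t. S t k)"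
    and V_lipschitz: "bounded_lipschitz_on {0..} (\<lambda>t. V t k)"
    and I_lipschitz: "bounded_lipschitz_on {0..} (\<lambda>t. I t k)"
  using S_pos[OF _ assms] V_pos[OF _ assms] I_pos[OF _ assms]
    S_lt_1[OF _ assms] V_lt_1[OF _ assms] I_lt_1[OF _ assms]
  by (auto simp: abs_le_iff less_imp_le
      intro!: bounded_derivative_imp_bounded_lipschitz_on[where B = 1]
      S_deriv[OF _ assms] V_deriv[OF _ assms] I_deriv[OF _ assms]
      rhs_bounded(1)[OF _ assms] rhs_bounded(2)[OF _ assms] rhs_bounded(3)[OF _ assms])

lemma theta_lipschitz: "bounded_lipschitz_on {0..} theta"
  unfolding theta_eq_weighted_sum
  by (intro bounded_lipschitz_on_sum bounded_lipschitz_on_mult bounded_lipschitz_on_const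
      I_lipschitz finite_atLeastAtMost) simp

section \<open>Lyapunov function and global attractivity\<close>

definition W :: "real \<Rightarrow> real" where
  "W t = (\<Sum>k=1..n. c k * (volterra (Se k) (S t k) + volterra (Ve k) (V t k)
                              + volterra (Ie k) (I t k)))"

definition W' :: "real \<Rightarrow> real" where
  "W' t = (\<Sum>k=1..n. c k * ((1 - Se k / S t k) * fS t k + (1 - Ve k / V t k) * fV t k
                               + (1 - Ie k / I t k) * fI t k))"

definition psi :: "real \<Rightarrow> real" where
  "psi t = (\<Sum>k=1..n. c k * (d * (S t k - Se k)\<^sup>2 + omega / Se k * (S t k * Ve k - V t k * Se k)\<^sup>2))"

lemma W_deriv: "0 \<le> t \<Longrightarrow> (W has_real_derivative W' t) (at t within {0..})"
  unfolding W_def[abs_def] W'_def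
  by (intro DERIV_sum DERIV_cmult DERIV_add DERIV_volterra S_deriv V_deriv I_deriv
      S_pos V_pos I_pos Se_pos Ve_pos Ie_pos) auto

lemma theta_remainder_sum_eq_0:
  assumes "0 \<le> t"
  shows "(\<Sum>k=1..n. c k * (D * Ie k * (theta t / Theta_e - I t k / Ie k
            + I t k / Ie k * (Theta_e / theta t) - 1))) = 0"
proof -
  have "(\<Sum>k=1..n. c k * (D * Ie k * (theta t / Theta_e - I t k / Ie k
            + I t k / Ie k * (Theta_e / theta t) - 1)))
      = (\<Sum>k=1..n. D * (theta t / Theta_e - 1) * (c k * Ie k)
            + D * (Theta_e / theta t - 1) * (c k * I t k))"
  proof (rule sum.cong[OF refl])
    fix k assume "k \<in> {1..n}"
    then show "c k * (D * Ie k * (theta t / Theta_e - I t k / Ie k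
            + I t k / Ie k * (Theta_e / theta t) - 1))
      = D * (theta t / Theta_e - 1) * (c k * Ie k) + D * (Theta_e / theta t - 1) * (c k * I t k)"
      using Ie_pos[of k] by (simp add: field_simps)
  qed
  also have "\<dots> = D * (theta t / Theta_e - 1) * Theta_e + D * (Theta_e / theta t - 1) * theta t"
    unfolding sum.distrib theta_eq_weighted_sum Theta_e_def Theta_eq_weighted_sum
    by (simp add: sum_distrib_left)
  also have "\<dots> = 0" using theta_pos[OF assms] Theta_e_pos by (simp add: field_simps)
  finally show ?thesis .
qed

lemma psi_term_nonneg:
  "k \<in> {1..n} \<Longrightarrow> 0 \<le> c k * (d * (S t k - Se k)\<^sup>2 + omega / Se k * (S t k * Ve k - V t k * Se k)\<^sup>2)"
  using c_pos d_pos const_pos Se_pos by (simp add: less_imp_le)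

lemma psi_nonneg: "0 \<le> psi t"
  unfolding psi_def using psi_term_nonneg by (intro sum_nonneg) auto

lemma W'_le_neg_psi:
  assumes "0 \<le> t"
  shows "W' t \<le> - psi t"
proof -
  have "W' t \<le> (\<Sum>k=1..n. c k * (- (d * (S t k - Se k)\<^sup>2
            + omega / Se k * (S t k * Ve k - V t k * Se k)\<^sup>2)
        + D * Ie k * (theta t / Theta_e - I t k / Ie k
            + I t k / Ie k * (Theta_e / theta t) - 1)))"
    unfolding W'_def
  proof (intro sum_mono)
    fix k assume k: "k \<in> {1..n}"
    have "(1 - Se k / S t k) * fS t k + (1 - Ve k / V t k) * fV t k + (1 - Ie k / I t k) * fI t k
      \<le> - (d * (S t k - Se k)\<^sup>2 + omega / Se k * (S t k * Ve k - V t k * Se k)\<^sup>2)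
        + D * Ie k * (theta t / Theta_e - I t k / Ie k + I t k / Ie k * (Theta_e / theta t) - 1)"
      unfolding fS_eq fV_eq fI_eq
      by (rule class_lyapunov_estimate[OF _ _ _ _ _ _ _ Theta_e_pos lam_pos[OF k] d_pos const_pos(5)
            const_pos(1) delta(1) _ _ eq_S[OF k] eq_V[OF k] eq_I[OF k]])
        (use assms k S_pos V_pos I_pos theta_pos Se_pos Ve_pos Ie_pos S_lt_1 V_lt_1
          in \<open>auto intro: less_imp_le\<close>)
    then show "c k * ((1 - Se k / S t k) * fS t k + (1 - Ve k / V t k) * fV t k
        + (1 - Ie k / I t k) * fI t k)
      \<le> c k * (- (d * (S t k - Se k)\<^sup>2 + omega / Se k * (S t k * Ve k - V t k * Se k)\<^sup>2)
        + D * Ie k * (theta t / Theta_e - I t k / Ie k + I t k / Ie k * (Theta_e / theta t) - 1))"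
      using c_pos[OF k] by (intro mult_left_mono) auto
  qed
  also have "\<dots> = - psi t"
    unfolding distrib_left mult_minus_right sum.distrib sum_negf psi_def
      theta_remainder_sum_eq_0[OF assms] by simp
  finally show ?thesis .
qed

lemma W_nonneg: "0 \<le> t \<Longrightarrow> 0 \<le> W t"
  unfolding W_def using c_pos Se_pos Ve_pos Ie_pos S_pos V_pos I_pos
  by (intro sum_nonneg mult_nonneg_nonneg add_nonneg_nonneg volterra_nonneg)
    (auto intro: less_imp_le)

lemma W_antimono:
  assumes "0 \<le> s" "s \<le> t"
  shows "W t \<le> W s"
proof (rule DERIV_nonpos_imp_decreasing_on_nonneg[OF assms, where f' = W'])
  fix x assume "s < x" "x < t"
  then show "W' x \<le> 0" using W'_le_neg_psi[of x] psi_nonneg[of x] assms(1) by simp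
qed (use W_deriv assms(1) in simp)

lemma psi_lipschitz: "bounded_lipschitz_on {0..} psi"
  unfolding psi_def[abs_def] power2_eq_square
  by (intro bounded_lipschitz_on_sum bounded_lipschitz_on_mult bounded_lipschitz_on_add
      bounded_lipschitz_on_diff bounded_lipschitz_on_const S_lipschitz V_lipschitz
      finite_atLeastAtMost)

lemma psi_tendsto_0: "(psi \<longlongrightarrow> 0) at_top"
proof (rule barbalat[where e = "\<lambda>_. 0"])
  show "(W \<longlongrightarrow> Inf (W ` {0..})) at_top"
    using W_antimono W_nonneg by (rule antimono_nonneg_tendsto_Inf)
  show "\<bar>psi x\<bar> \<le> \<bar>W' x\<bar> + \<bar>0\<bar>" if "0 \<le> x" for x
    using W'_le_neg_psi[OF that] psi_nonneg[of x] by simp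
qed (use W_deriv bounded_lipschitz_on_uniformly_continuous[OF psi_lipschitz] in simp_all)

lemma
  assumes "k \<in> {1..n}"
  shows S_dev_le_psi: "c k * d * (S t k - Se k)\<^sup>2 \<le> psi t"
    and SV_dev_le_psi: "c k * (omega / Se k) * (S t k * Ve k - V t k * Se k)\<^sup>2 \<le> psi t"
proof -
  have "c k * (d * (S t k - Se k)\<^sup>2) + c k * (omega / Se k * (S t k * Ve k - V t k * Se k)\<^sup>2)
      \<le> psi t"
    unfolding psi_def distrib_left[symmetric]
    by (rule member_le_sum[OF assms]) (use psi_term_nonneg in auto)
  moreover have "0 \<le> c k * (d * (S t k - Se k)\<^sup>2)"
    "0 \<le> c k * (omega / Se k * (S t k * Ve k - V t k * Se k)\<^sup>2)"
    using c_pos[OF assms] d_pos const_pos Se_pos[OF assms] by simp_all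
  ultimately show "c k * d * (S t k - Se k)\<^sup>2 \<le> psi t"
    "c k * (omega / Se k) * (S t k * Ve k - V t k * Se k)\<^sup>2 \<le> psi t"
    by (simp_all add: mult.assoc)
qed

lemma S_tendsto: assumes "k \<in> {1..n}" shows "((\<lambda>t. S t k) \<longlongrightarrow> Se k) at_top"
proof (rule LIM_zero_cancel, rule tendsto_zero_if_square_le[OF _ psi_tendsto_0])
  fix t :: real
  show "(S t k - Se k)\<^sup>2 \<le> 1 / (c k * d) * psi t"
    using S_dev_le_psi[OF assms, of t] c_pos[OF assms] d_pos by (simp add: field_simps)
qed

text \<open>\<open>psi\<close> controls \<open>S_k Ve_k - V_k Se_k\<close>, which together with \<open>S_k \<rightarrow> Se_k\<close> pins down \<open>V_k\<close>.\<close>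

lemma V_tendsto: assumes "k \<in> {1..n}" shows "((\<lambda>t. V t k) \<longlongrightarrow> Ve k) at_top"
proof -
  have "((\<lambda>t. S t k * Ve k - V t k * Se k) \<longlongrightarrow> 0) at_top"
  proof (rule tendsto_zero_if_square_le[OF _ psi_tendsto_0])
    fix t :: real
    show "(S t k * Ve k - V t k * Se k)\<^sup>2 \<le> Se k / (c k * omega) * psi t"
      using SV_dev_le_psi[OF assms, of t] c_pos[OF assms] const_pos Se_pos[OF assms]
      by (simp add: field_simps)
  qed
  then have "((\<lambda>t. (S t k * Ve k - (S t k * Ve k - V t k * Se k)) / Se k)
      \<longlongrightarrow> (Se k * Ve k - 0) / Se k) at_top"
    using Se_pos[OF assms] by (intro tendsto_intros S_tendsto[OF assms]) auto
  then show ?thesis using Se_pos[OF assms] by simp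
qed

text \<open>Barbalat applied to \<open>S_1\<close>: its derivative differs from \<open>lam_1 S_1 (Theta_e - theta)\<close>
  by a term tending to \<open>0\<close>.\<close>

lemma theta_tendsto: "(theta \<longlongrightarrow> Theta_e) at_top"
proof -
  have one: "1 \<in> {1..n}" using n_ge by simp
  define z where "z t = lam 1 * S t 1 * (Theta_e - theta t)" for t
  define e where
    "e t = Lam b d Phi 1 - lam 1 * S t 1 * Theta_e + omega * V t 1 - (mu 1 + d) * S t 1" for t
  have "(z \<longlongrightarrow> 0) at_top"
  proof (rule barbalat[OF S_tendsto[OF one] S_deriv[OF _ one]])
    show "uniformly_continuous_on {0..} z"
      unfolding z_def[abs_def]
      by (intro bounded_lipschitz_on_uniformly_continuous bounded_lipschitz_on_mult
          bounded_lipschitz_on_diff bounded_lipschitz_on_const S_lipschitz[OF one] theta_lipschitz)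
    show "\<bar>z x\<bar> \<le> \<bar>fS x 1\<bar> + \<bar>- e x\<bar>" for x
      unfolding z_def e_def fS_eq by (simp add: algebra_simps abs_triangle_ineq4)
    have "((\<lambda>t. - e t) \<longlongrightarrow> - (Lam b d Phi 1 - lam 1 * Se 1 * Theta_e + omega * Ve 1
        - (mu 1 + d) * Se 1)) at_top"
      unfolding e_def by (intro tendsto_intros S_tendsto[OF one] V_tendsto[OF one])
    then show "((\<lambda>t. - e t) \<longlongrightarrow> 0) at_top" using eq_S[OF one] by simp
  qed
  then have "((\<lambda>t. Theta_e - z t / (lam 1 * S t 1)) \<longlongrightarrow> Theta_e - 0 / (lam 1 * Se 1)) at_top"
    using Se_pos[OF one] lam_pos[OF one] by (intro tendsto_intros S_tendsto[OF one]) auto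
  moreover have "\<forall>\<^sub>F t in at_top. Theta_e - z t / (lam 1 * S t 1) = theta t"
    using eventually_ge_at_top[of 0]
  proof eventually_elim
    case (elim t)
    show ?case using S_pos[OF elim one] lam_pos[OF one] by (simp add: z_def field_simps)
  qed
  ultimately show ?thesis by (simp add: tendsto_cong)
qed

lemma I_tendsto: assumes "k \<in> {1..n}" shows "((\<lambda>t. I t k) \<longlongrightarrow> Ie k) at_top"
proof (rule LIM_zero_cancel, rule linear_ode_tendsto_zero[OF D_pos])
  show "((\<lambda>t. I t k - Ie k) has_real_derivative fI x k) (at x within {0..})" if "0 \<le> x" for x
    using I_deriv[OF that assms] by (auto intro!: derivative_eq_intros)
  show "fI x k = - D * (I x k - Ie k)
      + (lam k * S x k * theta x + delta * lam k * V x k * theta x - D * Ie k)" for x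
    unfolding fI_eq by (simp add: algebra_simps)
  have "((\<lambda>t. lam k * S t k * theta t + delta * lam k * V t k * theta t - D * Ie k) \<longlongrightarrow>
      lam k * Se k * Theta_e + delta * lam k * Ve k * Theta_e - D * Ie k) at_top"
    by (intro tendsto_intros S_tendsto[OF assms] V_tendsto[OF assms] theta_tendsto)
  then show "((\<lambda>t. lam k * S t k * theta t + delta * lam k * V t k * theta t - D * Ie k)
      \<longlongrightarrow> 0) at_top"
    using eq_I[OF assms] by simp
qed

lemma Q_tendsto: assumes "k \<in> {1..n}" shows "((\<lambda>t. Q t k) \<longlongrightarrow> Qe k) at_top"
proof (rule LIM_zero_cancel, rule linear_ode_tendsto_zero[where m = "eta + d"])
  show "eta + d > 0" using const_pos d_pos by simp
  show "((\<lambda>t. Q t k - Qe k) has_real_derivative fQ x k) (at x within {0..})" if "0 \<le> x" for x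
    using Q_deriv[OF that assms] by (auto intro!: derivative_eq_intros)
  show "fQ x k = - (eta + d) * (Q x k - Qe k) + (beta * I x k - (eta + d) * Qe k)" for x
    unfolding fQ_eq by (simp add: algebra_simps)
  have "((\<lambda>t. beta * I t k - (eta + d) * Qe k) \<longlongrightarrow> beta * Ie k - (eta + d) * Qe k) at_top"
    by (intro tendsto_intros I_tendsto[OF assms])
  then show "((\<lambda>t. beta * I t k - (eta + d) * Qe k) \<longlongrightarrow> 0) at_top"
    using eq_Q[OF assms] by simp
qed

lemma R_tendsto: assumes "k \<in> {1..n}" shows "((\<lambda>t. R t k) \<longlongrightarrow> Rst k) at_top"
proof (rule LIM_zero_cancel, rule linear_ode_tendsto_zero[OF d_pos])
  show "((\<lambda>t. R t k - Rst k) has_real_derivative fR x k) (at x within {0..})" if "0 \<le> x" for x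
    using R_deriv[OF that assms] by (auto intro!: derivative_eq_intros)
  show "fR x k = - d * (R x k - Rst k) + (gamma * I x k + eta * Q x k + alpha * V x k - d * Rst k)"
    for x
    unfolding fR_eq by (simp add: algebra_simps)
  have "((\<lambda>t. gamma * I t k + eta * Q t k + alpha * V t k - d * Rst k) \<longlongrightarrow>
      gamma * Ie k + eta * Qe k + alpha * Ve k - d * Rst k) at_top"
    by (intro tendsto_intros I_tendsto[OF assms] Q_tendsto[OF assms] V_tendsto[OF assms])
  then show "((\<lambda>t. gamma * I t k + eta * Q t k + alpha * V t k - d * Rst k) \<longlongrightarrow> 0) at_top"
    using eq_R[OF assms] by simp
qed

end

section \<open>Lyapunov stability\<close>

context sviqr_equilibrium
begin

definition c_min :: real where "c_min = Min (c ` {1..n})"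
definition e_min :: real where "e_min = Min ((\<lambda>k. min (Se k) (min (Ve k) (Ie k))) ` {1..n})"

text \<open>\<open>rho s\<close> bounds the deviation of \<open>S\<close>, \<open>V\<close>, \<open>I\<close> for initial distance \<open>s\<close>: it combines
  \<open>W 0 \<le> 2 c_sum / e_min * s\<close>, \<open>c_min * volterra a x \<le> W t \<le> W 0\<close> and
  \<open>(x - a)\<^sup>2 \<le> 4 * volterra a x\<close>.\<close>

definition rho :: "real \<Rightarrow> real" where "rho s = sqrt (8 * c_sum / (e_min * c_min) * s)"
definition Q_dev_bound :: "real \<Rightarrow> real" where "Q_dev_bound s = s + beta * rho s / (eta + d)"
definition R_dev_bound :: "real \<Rightarrow> real" where
  "R_dev_bound s = s + (gamma * rho s + eta * Q_dev_bound s + alpha * rho s) / d"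
definition stability_bound :: "real \<Rightarrow> real" where
  "stability_bound s = real n * (3 * rho s + Q_dev_bound s + R_dev_bound s)"

lemma c_min_pos: "c_min > 0"
  unfolding c_min_def using n_ge c_pos by (subst Min_gr_iff) auto

lemma c_min_le: "k \<in> {1..n} \<Longrightarrow> c_min \<le> c k"
  unfolding c_min_def by (intro Min_le) auto

lemma e_min_pos: "e_min > 0"
  unfolding e_min_def using n_ge Se_pos Ve_pos Ie_pos by (subst Min_gr_iff) auto

lemma e_min_le:
  assumes "k \<in> {1..n}" shows "e_min \<le> Se k" "e_min \<le> Ve k" "e_min \<le> Ie k"
proof -
  have "e_min \<le> min (Se k) (min (Ve k) (Ie k))"
    unfolding e_min_def using assms by (intro Min_le) auto
  then show "e_min \<le> Se k" "e_min \<le> Ve k" "e_min \<le> Ie k" by simp_all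
qed

lemma stability_bound_small:
  assumes "\<epsilon> > 0"
  obtains \<delta> where "\<delta> > 0" "\<And>s. 0 \<le> s \<Longrightarrow> s < \<delta> \<Longrightarrow> stability_bound s < \<epsilon>"
proof -
  have "(stability_bound \<longlongrightarrow> stability_bound 0) (at 0)"
    unfolding stability_bound_def[abs_def] Q_dev_bound_def[abs_def] R_dev_bound_def[abs_def]
      rho_def[abs_def]
    by (intro tendsto_intros) (use const_pos d_pos in auto)
  moreover have "stability_bound 0 = 0"
    by (simp add: stability_bound_def Q_dev_bound_def R_dev_bound_def rho_def)
  ultimately have "\<forall>\<^sub>F s in at 0. stability_bound s < \<epsilon>"
    using assms by (auto intro: order_tendstoD)
  then obtain \<delta> where "\<delta> > 0" "\<And>s. s \<noteq> 0 \<Longrightarrow> \<bar>s\<bar> < \<delta> \<Longrightarrow> stability_bound s < \<epsilon>"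
    unfolding eventually_at by (auto simp: dist_real_def)
  then show ?thesis
    using that \<open>stability_bound 0 = 0\<close> assms by (metis abs_of_nonneg)
qed

end

context sviqr_solution
begin

definition s0 :: real where "s0 = sdist n (S 0) (V 0) (I 0) (Q 0) (R 0) Se Ve Ie Qe Rst"

lemma initial_dev_le_s0:
  assumes "k \<in> {1..n}"
  shows "\<bar>S 0 k - Se k\<bar> + \<bar>V 0 k - Ve k\<bar> + \<bar>I 0 k - Ie k\<bar> + \<bar>Q 0 k - Qe k\<bar> + \<bar>R 0 k - Rst k\<bar>
    \<le> s0"
  unfolding s0_def sdist_def by (rule member_le_sum[OF assms]) auto

lemma W_0_le:
  assumes small: "s0 < e_min / 2" "s0 \<le> 1"
  shows "W 0 \<le> 2 * c_sum / e_min * s0"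
proof -
  have "W 0 \<le> (\<Sum>k=1..n. c_sum * (2 / e_min * (\<bar>S 0 k - Se k\<bar> + \<bar>V 0 k - Ve k\<bar>
      + \<bar>I 0 k - Ie k\<bar> + \<bar>Q 0 k - Qe k\<bar> + \<bar>R 0 k - Rst k\<bar>)))"
    unfolding W_def
  proof (rule sum_mono)
    have vl: "volterra a x \<le> 2 / e_min * \<bar>x - a\<bar>" if "e_min \<le> a" "0 < x" "\<bar>x - a\<bar> \<le> s0"
      for a x
      using that small e_min_pos by (intro volterra_le_linear) auto
    fix k assume k: "k \<in> {1..n}"
    have dev: "\<bar>S 0 k - Se k\<bar> \<le> s0" "\<bar>V 0 k - Ve k\<bar> \<le> s0" "\<bar>I 0 k - Ie k\<bar> \<le> s0"
      using initial_dev_le_s0[OF k] by auto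
    have "volterra (Se k) (S 0 k) \<le> 2 / e_min * \<bar>S 0 k - Se k\<bar>"
      "volterra (Ve k) (V 0 k) \<le> 2 / e_min * \<bar>V 0 k - Ve k\<bar>"
      "volterra (Ie k) (I 0 k) \<le> 2 / e_min * \<bar>I 0 k - Ie k\<bar>"
      using vl e_min_le[OF k] init_pos[OF k] dev by simp_all
    moreover have "0 \<le> 2 / e_min * \<bar>Q 0 k - Qe k\<bar>" "0 \<le> 2 / e_min * \<bar>R 0 k - Rst k\<bar>"
      using e_min_pos by simp_all
    ultimately have "volterra (Se k) (S 0 k) + volterra (Ve k) (V 0 k) + volterra (Ie k) (I 0 k)
        \<le> 2 / e_min * (\<bar>S 0 k - Se k\<bar> + \<bar>V 0 k - Ve k\<bar> + \<bar>I 0 k - Ie k\<bar>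
            + \<bar>Q 0 k - Qe k\<bar> + \<bar>R 0 k - Rst k\<bar>)"
      unfolding distrib_left by linarith
    moreover have "0 \<le> volterra (Se k) (S 0 k) + volterra (Ve k) (V 0 k) + volterra (Ie k) (I 0 k)"
      using Se_pos Ve_pos Ie_pos init_pos k by (intro add_nonneg_nonneg volterra_nonneg) auto
    ultimately show "c k * (volterra (Se k) (S 0 k) + volterra (Ve k) (V 0 k)
          + volterra (Ie k) (I 0 k))
        \<le> c_sum * (2 / e_min * (\<bar>S 0 k - Se k\<bar> + \<bar>V 0 k - Ve k\<bar> + \<bar>I 0 k - Ie k\<bar>
            + \<bar>Q 0 k - Qe k\<bar> + \<bar>R 0 k - Rst k\<bar>))"
      using c_le_c_sum[OF k] c_pos[OF k] by (intro mult_mono) auto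
  qed
  also have "\<dots> = 2 * c_sum / e_min * s0"
    unfolding s0_def sdist_def sum_distrib_left by (rule sum.cong[OF refl]) simp
  finally show ?thesis .
qed

lemma volterra_le_W:
  assumes "0 \<le> t" "k \<in> {1..n}"
  shows "c k * volterra (Se k) (S t k) \<le> W t" "c k * volterra (Ve k) (V t k) \<le> W t"
    "c k * volterra (Ie k) (I t k) \<le> W t"
proof -
  have nonneg: "0 \<le> volterra (Se j) (S t j)" "0 \<le> volterra (Ve j) (V t j)"
    "0 \<le> volterra (Ie j) (I t j)" if "j \<in> {1..n}" for j
    using that assms(1) by (auto intro!: volterra_nonneg Se_pos Ve_pos Ie_pos S_pos V_pos I_pos)
  have "c k * (volterra (Se k) (S t k) + volterra (Ve k) (V t k) + volterra (Ie k) (I t k)) \<le> W t"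
    unfolding W_def
    by (intro member_le_sum[OF assms(2)])
      (use nonneg c_pos[THEN less_imp_le] in \<open>auto intro!: mult_nonneg_nonneg add_nonneg_nonneg\<close>)
  then show "c k * volterra (Se k) (S t k) \<le> W t" "c k * volterra (Ve k) (V t k) \<le> W t"
    "c k * volterra (Ie k) (I t k) \<le> W t"
    using nonneg[OF assms(2)] c_pos[OF assms(2)] unfolding distrib_left
    by (smt (verit) mult_nonneg_nonneg)+
qed

lemma dev_le_rho:
  assumes "0 \<le> t" "k \<in> {1..n}" and small: "s0 < e_min / 2" "s0 \<le> 1"
    and "0 < a" "a \<le> 1" "0 < x" "x \<le> 1" and le_W: "c k * volterra a x \<le> W t"
  shows "\<bar>x - a\<bar> \<le> rho s0"
proof -
  have "c_min * volterra a x \<le> c k * volterra a x"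
    using c_min_le[OF assms(2)] volterra_nonneg[of a x] assms(5,7) by (intro mult_right_mono) auto
  also have "\<dots> \<le> W 0" using le_W W_antimono[OF order.refl assms(1)] by simp
  also have "\<dots> \<le> 2 * c_sum / e_min * s0" by (rule W_0_le[OF small])
  finally have "volterra a x \<le> 2 * c_sum / e_min * s0 / c_min"
    using c_min_pos e_min_pos by (simp add: field_simps)
  then have "(x - a)\<^sup>2 \<le> 4 * (2 * c_sum / e_min * s0 / c_min)"
    using square_le_volterra[of a x] assms(5-8) by linarith
  then have "(x - a)\<^sup>2 \<le> 8 * c_sum / (e_min * c_min) * s0" by simp
  then have "sqrt ((x - a)\<^sup>2) \<le> rho s0" unfolding rho_def by (rule real_sqrt_le_mono)
  then show ?thesis by simp
qed

lemma
  assumes "0 \<le> t" "k \<in> {1..n}" and small: "s0 < e_min / 2" "s0 \<le> 1"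
  shows S_dev: "\<bar>S t k - Se k\<bar> \<le> rho s0"
    and V_dev: "\<bar>V t k - Ve k\<bar> \<le> rho s0"
    and I_dev: "\<bar>I t k - Ie k\<bar> \<le> rho s0"
proof -
  note dev = dev_le_rho[OF assms] and k = assms(2) and tk = assms(1,2)
  note le_W = volterra_le_W[OF tk] and le_1 = equilibrium_le_1[OF k]
  show "\<bar>S t k - Se k\<bar> \<le> rho s0"
    by (rule dev[OF Se_pos[OF k] le_1(1) S_pos[OF tk] less_imp_le[OF S_lt_1[OF tk]] le_W(1)])
  show "\<bar>V t k - Ve k\<bar> \<le> rho s0"
    by (rule dev[OF Ve_pos[OF k] le_1(2) V_pos[OF tk] less_imp_le[OF V_lt_1[OF tk]] le_W(2)])
  show "\<bar>I t k - Ie k\<bar> \<le> rho s0"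
    by (rule dev[OF Ie_pos[OF k] le_1(3) I_pos[OF tk] less_imp_le[OF I_lt_1[OF tk]] le_W(3)])
qed

lemma Q_dev:
  assumes "0 \<le> t" "k \<in> {1..n}" and small: "s0 < e_min / 2" "s0 \<le> 1"
  shows "\<bar>Q t k - Qe k\<bar> \<le> Q_dev_bound s0"
proof -
  have "\<bar>Q t k - Qe k\<bar> \<le> \<bar>Q 0 k - Qe k\<bar> + beta * rho s0 / (eta + d)"
  proof (rule linear_ode_abs_le[where g' = "\<lambda>t. fQ t k" and e = "\<lambda>t. beta * (I t k - Ie k)"])
    fix x :: real assume "0 \<le> x"
    show "((\<lambda>t. Q t k - Qe k) has_real_derivative fQ x k) (at x within {0..})"
      using Q_deriv[OF \<open>0 \<le> x\<close> assms(2)] by (auto intro!: derivative_eq_intros)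
    show "fQ x k = - (eta + d) * (Q x k - Qe k) + beta * (I x k - Ie k)"
      unfolding fQ_eq using eq_Q[OF assms(2)] by (simp add: algebra_simps)
    show "\<bar>beta * (I x k - Ie k)\<bar> \<le> beta * rho s0"
      using I_dev[OF \<open>0 \<le> x\<close> assms(2) small] const_pos by (simp add: abs_mult)
  qed (use assms const_pos d_pos in auto)
  then show ?thesis
    using initial_dev_le_s0[OF assms(2)] unfolding Q_dev_bound_def by simp
qed

lemma R_dev:
  assumes "0 \<le> t" "k \<in> {1..n}" and small: "s0 < e_min / 2" "s0 \<le> 1"
  shows "\<bar>R t k - Rst k\<bar> \<le> R_dev_bound s0"
proof -
  have "\<bar>R t k - Rst k\<bar>
      \<le> \<bar>R 0 k - Rst k\<bar> + (gamma * rho s0 + eta * Q_dev_bound s0 + alpha * rho s0) / d"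
  proof (rule linear_ode_abs_le[OF d_pos assms(1), where g' = "\<lambda>t. fR t k"
        and e = "\<lambda>t. gamma * (I t k - Ie k) + eta * (Q t k - Qe k) + alpha * (V t k - Ve k)"])
    fix x :: real assume "0 \<le> x"
    show "((\<lambda>t. R t k - Rst k) has_real_derivative fR x k) (at x within {0..})"
      using R_deriv[OF \<open>0 \<le> x\<close> assms(2)] by (auto intro!: derivative_eq_intros)
    show "fR x k = - d * (R x k - Rst k)
        + (gamma * (I x k - Ie k) + eta * (Q x k - Qe k) + alpha * (V x k - Ve k))"
      unfolding fR_eq using eq_R[OF assms(2)] by (simp add: algebra_simps)
    have "\<bar>gamma * (I x k - Ie k)\<bar> \<le> gamma * rho s0" "\<bar>eta * (Q x k - Qe k)\<bar> \<le> eta * Q_dev_bound s0"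
      "\<bar>alpha * (V x k - Ve k)\<bar> \<le> alpha * rho s0"
      using I_dev[OF \<open>0 \<le> x\<close> assms(2) small] Q_dev[OF \<open>0 \<le> x\<close> assms(2) small]
        V_dev[OF \<open>0 \<le> x\<close> assms(2) small] const_pos
      by (simp_all add: abs_mult)
    then show "\<bar>gamma * (I x k - Ie k) + eta * (Q x k - Qe k) + alpha * (V x k - Ve k)\<bar>
        \<le> gamma * rho s0 + eta * Q_dev_bound s0 + alpha * rho s0"
      by (smt (verit) abs_triangle_ineq)
  qed
  then show ?thesis
    using initial_dev_le_s0[OF assms(2)] unfolding R_dev_bound_def by simp
qed

lemma sdist_le_stability_bound:
  assumes "0 \<le> t" and small: "s0 < e_min / 2" "s0 \<le> 1"
  shows "sdist n (S t) (V t) (I t) (Q t) (R t) Se Ve Ie Qe Rst \<le> stability_bound s0"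
proof -
  have "sdist n (S t) (V t) (I t) (Q t) (R t) Se Ve Ie Qe Rst
      \<le> (\<Sum>k=1..n. 3 * rho s0 + Q_dev_bound s0 + R_dev_bound s0)"
    unfolding sdist_def
    using S_dev[OF assms(1) _ small] V_dev[OF assms(1) _ small] I_dev[OF assms(1) _ small]
      Q_dev[OF assms(1) _ small] R_dev[OF assms(1) _ small]
    by (intro sum_mono) (smt (verit))
  then show ?thesis unfolding stability_bound_def by simp
qed

end

context sviqr_equilibrium
begin

lemma sviqr_solutionI:
  "is_solution n p lam phi mu b d Phi alpha beta gamma eta omega delta S V I Q R \<Longrightarrow>
    admissible_init n b d Phi (S 0) (V 0) (I 0) (Q 0) (R 0) \<Longrightarrow>
    sviqr_solution n p lam phi mu b d Phi alpha beta gamma eta omega delta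
      Se Ve Ie Qe Rst S V I Q R"
  using sviqr_equilibrium_axioms by (simp add: sviqr_solution_def sviqr_solution_axioms_def)

lemma lyapunov_stable:
  "\<forall>\<epsilon>>0. \<exists>\<delta>>0. \<forall>S V I Q R.
      is_solution n p lam phi mu b d Phi alpha beta gamma eta omega delta S V I Q R \<and>
      admissible_init n b d Phi (S 0) (V 0) (I 0) (Q 0) (R 0) \<and>
      sdist n (S 0) (V 0) (I 0) (Q 0) (R 0) Se Ve Ie Qe Rst < \<delta> \<longrightarrow>
      (\<forall>t\<ge>0. sdist n (S t) (V t) (I t) (Q t) (R t) Se Ve Ie Qe Rst < \<epsilon>)"
proof (intro allI impI)
  fix \<epsilon> :: real assume "\<epsilon> > 0"
  then obtain \<delta> where "\<delta> > 0" and \<delta>: "\<And>s. 0 \<le> s \<Longrightarrow> s < \<delta> \<Longrightarrow> stability_bound s < \<epsilon>"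
    using stability_bound_small by blast
  show "\<exists>\<delta>>0. \<forall>S V I Q R.
      is_solution n p lam phi mu b d Phi alpha beta gamma eta omega delta S V I Q R \<and>
      admissible_init n b d Phi (S 0) (V 0) (I 0) (Q 0) (R 0) \<and>
      sdist n (S 0) (V 0) (I 0) (Q 0) (R 0) Se Ve Ie Qe Rst < \<delta> \<longrightarrow>
      (\<forall>t\<ge>0. sdist n (S t) (V t) (I t) (Q t) (R t) Se Ve Ie Qe Rst < \<epsilon>)"
  proof (intro exI[of _ "min \<delta> (min (e_min / 2) 1)"] conjI allI impI)
    fix S V I Q R and t :: real
    assume H: "is_solution n p lam phi mu b d Phi alpha beta gamma eta omega delta S V I Q R \<and>
      admissible_init n b d Phi (S 0) (V 0) (I 0) (Q 0) (R 0) \<and>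
      sdist n (S 0) (V 0) (I 0) (Q 0) (R 0) Se Ve Ie Qe Rst < min \<delta> (min (e_min / 2) 1)"
      and "0 \<le> t"
    interpret sol: sviqr_solution n p lam phi mu b d Phi alpha beta gamma eta omega delta
        Se Ve Ie Qe Rst S V I Q R
      using H by (intro sviqr_solutionI) auto
    have "sol.s0 \<ge> 0" unfolding sol.s0_def sdist_def by (intro sum_nonneg) auto
    then show "sdist n (S t) (V t) (I t) (Q t) (R t) Se Ve Ie Qe Rst < \<epsilon>"
      using sol.sdist_le_stability_bound[OF \<open>0 \<le> t\<close>] \<delta>[of sol.s0] H
      by (simp add: sol.s0_def)
  qed (use \<open>\<delta> > 0\<close> e_min_pos in simp)
qed

lemma globally_attractive:
  "\<forall>S V I Q R.
      is_solution n p lam phi mu b d Phi alpha beta gamma eta omega delta S V I Q R \<and>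
      admissible_init n b d Phi (S 0) (V 0) (I 0) (Q 0) (R 0) \<longrightarrow>
      (\<forall>k\<in>{1..n}. ((\<lambda>t. S t k) \<longlongrightarrow> Se k) at_top \<and> ((\<lambda>t. V t k) \<longlongrightarrow> Ve k) at_top \<and>
                    ((\<lambda>t. I t k) \<longlongrightarrow> Ie k) at_top \<and> ((\<lambda>t. Q t k) \<longlongrightarrow> Qe k) at_top \<and>
                    ((\<lambda>t. R t k) \<longlongrightarrow> Rst k) at_top)"
  using sviqr_solution.S_tendsto sviqr_solution.V_tendsto sviqr_solution.I_tendsto
    sviqr_solution.Q_tendsto sviqr_solution.R_tendsto sviqr_solutionI
  by meson

end

theorem theorem4p5:
  fixes n :: nat and p lam phi mu :: "nat \<Rightarrow> real"
    and b d Phi alpha beta gamma eta omega delta :: real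
    and Se Ve Ie Qe Rst :: "nat \<Rightarrow> real"
  assumes n_ge: "n \<ge> 1"
    and p_pos: "\<forall>k\<in>{1..n}. p k > 0"
    and p_sum: "(\<Sum>k=1..n. p k) = 1"
    and bd: "b > d" and d_pos: "d > 0"
    and Phi_pos: "Phi > 0"
    and Phi_eq: "Phi = (1 / avgdeg n p) *
                   (\<Sum>i=1..n. real i * p i * b * Phi / (d + b * real i * Phi))"
    and par_pos: "\<forall>k\<in>{1..n}. lam k > 0 \<and> phi k > 0 \<and> mu k > 0"
    and const_pos: "alpha > 0" "beta > 0" "gamma > 0" "eta > 0" "omega > 0"
    and delta: "0 \<le> delta" "delta \<le> 1"
    and R0_gt: "R0 n p lam phi mu b d Phi alpha beta gamma omega delta > 1"
    and Eq: "is_endemic_equilibrium n p lam phi mu b d Phi alpha beta gamma eta omega delta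
               Se Ve Ie Qe Rst"
  shows
    \<comment> \<open>Lyapunov stability (relative to the admissible region)\<close>
    "(\<forall>\<epsilon>>0. \<exists>\<delta>>0. \<forall>S V I Q R.
        is_solution n p lam phi mu b d Phi alpha beta gamma eta omega delta S V I Q R \<and>
        admissible_init n b d Phi (S 0) (V 0) (I 0) (Q 0) (R 0) \<and>
        sdist n (S 0) (V 0) (I 0) (Q 0) (R 0) Se Ve Ie Qe Rst < \<delta> \<longrightarrow>
        (\<forall>t\<ge>0. sdist n (S t) (V t) (I t) (Q t) (R t) Se Ve Ie Qe Rst < \<epsilon>))
     \<and>
     \<comment> \<open>global attractivity\<close>
     (\<forall>S V I Q R.
        is_solution n p lam phi mu b d Phi alpha beta gamma eta omega delta S V I Q R \<and>
        admissible_init n b d Phi (S 0) (V 0) (I 0) (Q 0) (R 0) \<longrightarrow>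
        (\<forall>k\<in>{1..n}. ((\<lambda>t. S t k) \<longlongrightarrow> Se k) at_top \<and>
                      ((\<lambda>t. V t k) \<longlongrightarrow> Ve k) at_top \<and>
                      ((\<lambda>t. I t k) \<longlongrightarrow> Ie k) at_top \<and>
                      ((\<lambda>t. Q t k) \<longlongrightarrow> Qe k) at_top \<and>
                      ((\<lambda>t. R t k) \<longlongrightarrow> Rst k) at_top))"
proof -
  \<comment> \<open>\<open>p_sum\<close>, \<open>Phi_eq\<close> and \<open>R0_gt\<close> only guarantee that \<open>E\<^sup>*\<close> exists; \<open>Eq\<close> provides it.\<close>
  interpret sviqr_equilibrium n p lam phi mu b d Phi alpha beta gamma eta omega delta
      Se Ve Ie Qe Rst
    by unfold_locales (use assms in auto)
  show ?thesis using lyapunov_stable globally_attractive by blast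
qed

end
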